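(* Every piecewise testable set over a finite alphabet $\Sigma$ can be accepted by an end-decisive MM-QFA with bounded error.
   Context: A piecewise testable set over $\Sigma$ is a finite Boolean combination (unions, intersections, complements) of sets of the form $\Sigma^*z_1\Sigma^*z_2\Sigma^*\cdots\Sigma^*z_n\Sigma^*$ with $z_1,\dots,z_n\in\Sigma$. A measure-many quantum finite automaton (MM-QFA) over $\Sigma$ is a tuple $(Q,\Sigma,\{U_\sigma\}_{\sigma\in\Sigma\cup\{\$\}},q_0,Q_{acc},Q_{rej})$ with $Q$ finite indexing an orthonormal basis of $\mathbb{C}^Q$, end-marker $\$\notin\Sigma$, unitary $U_\sigma$, initial state $q_0$, and $Q$ partitioned into $Q_{acc},Q_{rej},Q_{non}$ with orthogonal projections $P_{acc},P_{rej},P_{non}$. On input $x$ it processes $x\$$ maintaining $(\psi,p_{acc},p_{rej})$, initially $(|q_0\rangle,0,0)$; on reading $\sigma$: $\psi'=U_\sigma\psi$, $p_{acc}\mathrel{+}=\|P_{acc}\psi'\|^2$, $p_{rej}\mathrel{+}=\|P_{rej}\psi'\|^2$, $\psi\leftarrow P_{non}\psi'$; the acceptance probability $p(x)$ is the final $p_{acc}$. It is end-decisive if $P_{acc}\psi'=0$ after reading every non-end-marker symbol, on every input. It accepts $L$ with bounded error if for some $\lambda$ and $\epsilon>0$, $p(x)>\lambda+\epsilon$ for $x\in L$ and $p(x)<\lambda-\epsilon$ for $x\notin L$. *)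

theory Defs
  imports Complex_Main "Jordan_Normal_Form.Matrix"
begin

text \<open>Words are lists over the alphabet type 'a. The set
  Sigma* z1 Sigma* z2 Sigma* ... Sigma* zn Sigma* is the set of words
  matching the pattern [z1,...,zn].\<close>

fun in_pattern :: "'a list \<Rightarrow> 'a list \<Rightarrow> bool" where
  "in_pattern [] w = True"
| "in_pattern (z # zs) w = (\<exists>u v. w = u @ z # v \<and> in_pattern zs v)"

definition pattern_lang :: "'a list \<Rightarrow> 'a list set" where
  "pattern_lang zs = {w. in_pattern zs w}"

inductive piecewise_testable :: "'a list set \<Rightarrow> bool" where
  base: "piecewise_testable (pattern_lang zs)"
| union: "piecewise_testable A \<Longrightarrow> piecewise_testable B \<Longrightarrow> piecewise_testable (A \<union> B)"
| inter: "piecewise_testable A \<Longrightarrow> piecewise_testable B \<Longrightarrow> piecewise_testable (A \<inter> B)"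
| compl: "piecewise_testable A \<Longrightarrow> piecewise_testable (- A)"

text \<open>States are 0..<qdim (indexing an orthonormal basis of C^qdim).
  Input symbols are Some a; the end-marker is None.\<close>
record 'a mmqfa =
  qdim :: nat
  trans :: "'a option \<Rightarrow> complex mat"
  init :: nat
  Qacc :: "nat set"
  Qrej :: "nat set"

definition adjoint_mat :: "complex mat \<Rightarrow> complex mat" where
  "adjoint_mat U = mat (dim_col U) (dim_row U) (\<lambda>(i,j). cnj (U $$ (j,i)))"

definition unitary_mat :: "nat \<Rightarrow> complex mat \<Rightarrow> bool" where
  "unitary_mat n U \<longleftrightarrow> U \<in> carrier_mat n n \<and> adjoint_mat U * U = 1\<^sub>m n
     \<and> U * adjoint_mat U = 1\<^sub>m n"

definition Qnon :: "'a mmqfa \<Rightarrow> nat set" where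
  "Qnon M = {..<qdim M} - Qacc M - Qrej M"

definition wf_mmqfa :: "'a mmqfa \<Rightarrow> bool" where
  "wf_mmqfa M \<longleftrightarrow> init M < qdim M
     \<and> Qacc M \<subseteq> {..<qdim M} \<and> Qrej M \<subseteq> {..<qdim M} \<and> Qacc M \<inter> Qrej M = {}
     \<and> (\<forall>s. unitary_mat (qdim M) (trans M s))"

definition proj :: "nat set \<Rightarrow> complex vec \<Rightarrow> complex vec" where
  "proj S v = vec (dim_vec v) (\<lambda>i. if i \<in> S then v $ i else 0)"

definition sqnorm :: "complex vec \<Rightarrow> real" where
  "sqnorm v = (\<Sum>i<dim_vec v. (cmod (v $ i))\<^sup>2)"

definition basis_ket :: "nat \<Rightarrow> nat \<Rightarrow> complex vec" where
  "basis_ket n q = vec n (\<lambda>i. if i = q then 1 else 0)"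

text \<open>One step on symbol s: configuration (psi, p_acc, p_rej).\<close>
definition step :: "'a mmqfa \<Rightarrow> 'a option \<Rightarrow> complex vec \<times> real \<times> real
    \<Rightarrow> complex vec \<times> real \<times> real" where
  "step M s c = (case c of (psi, pa, pr) \<Rightarrow>
      let psi' = trans M s *\<^sub>v psi in
      (proj (Qnon M) psi', pa + sqnorm (proj (Qacc M) psi'), pr + sqnorm (proj (Qrej M) psi')))"

definition run :: "'a mmqfa \<Rightarrow> 'a option list \<Rightarrow> complex vec \<times> real \<times> real" where
  "run M ss = fold (step M) ss (basis_ket (qdim M) (init M), 0, 0)"

definition acc_prob :: "'a mmqfa \<Rightarrow> 'a list \<Rightarrow> real" where
  "acc_prob M x = fst (snd (run M (map Some x @ [None])))"

definition end_decisive :: "'a mmqfa \<Rightarrow> bool" where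
  "end_decisive M \<longleftrightarrow> (\<forall>x a. proj (Qacc M) (trans M (Some a) *\<^sub>v fst (run M (map Some x))) = 0\<^sub>v (qdim M))"

definition accepts_bounded_error :: "'a mmqfa \<Rightarrow> 'a list set \<Rightarrow> bool" where
  "accepts_bounded_error M L \<longleftrightarrow> (\<exists>lam \<epsilon>::real. \<epsilon> > 0 \<and>
     (\<forall>x. (x \<in> L \<longrightarrow> acc_prob M x > lam + \<epsilon>) \<and> (x \<notin> L \<longrightarrow> acc_prob M x < lam - \<epsilon>)))"

end

theory Submission
  imports Defs
begin

text \<open>A piecewise testable language is a Boolean function \<open>F\<close> of the bits
  \<open>w \<in> \<Sigma>\<^sup>*z\<^sub>1\<Sigma>\<^sup>*\<dots>z\<^sub>k\<Sigma>\<^sup>*\<close> for finitely many nonempty patterns \<open>z\<close>.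
  A pattern \<open>z\<close> of length \<open>k\<close> is tracked by a real vector on the states \<open>0..2k\<close>, initially
  concentrated on \<open>0\<close>: each letter applies two orthogonal projections, averaging the pairs
  \<open>(2l, 2l+1)\<close> and then \<open>(2l+1, 2l+2)\<close> over the positions \<open>l\<close> with \<open>z\<^sub>l\<close> equal to
  the letter. When the greedy match has consumed \<open>p\<close> letters of \<open>z\<close>, the vector is supported
  exactly on \<open>0..2p\<close> with entries at least \<open>4\<^sup>-\<^sup>p\<close>, so its last entry is positive iff
  \<open>z\<close> occurs.

  A projection \<open>Q\<close> is made unitary as the reflection exchanging the \<open>(I - Q)\<close>-part of the
  non-halting block with a rejecting block, which is measured away at once. So the non-halting
  state after a word is the product of these projections applied to the initial state, and
  nothing is accepted before the end-marker. There, the projection onto the span of orthonormal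
  product test vectors \<open>D\<^sub>S\<close>, one for each set \<open>S\<close> of patterns satisfying \<open>F\<close>, is
  moved into the accepting block. The test vector of the set of occurring patterns has amplitude
  bounded below; every other one is orthogonal to the state or picks up a factor
  \<open>\<le> 1 - 2\<cdot>4\<^sup>-\<^sup>K\<close> from each of \<open>r - 1\<close> extra copies of a pattern it wrongly
  expects to be absent, so a large \<open>r\<close> separates members from non-members.\<close>

section \<open>Greedy matching of patterns\<close>

lemma in_pattern_append_left: "in_pattern zs v \<Longrightarrow> in_pattern zs (u @ v)"
proof (cases zs)
  case (Cons z zs')
  assume "in_pattern zs v"
  then obtain u' v' where "v = u' @ z # v'" "in_pattern zs' v'" using Cons by auto
  then have "u @ v = (u @ u') @ z # v'" "in_pattern zs' v'" by simp_all
  then show ?thesis using Cons by (simp only: in_pattern.simps) blast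
qed simp

lemma in_pattern_Cons_same: "in_pattern (c # cs) (c # w) \<longleftrightarrow> in_pattern cs w"
proof
  assume "in_pattern (c # cs) (c # w)"
  then obtain u v where uv: "c # w = u @ c # v" "in_pattern cs v" by auto
  show "in_pattern cs w"
  proof (cases u)
    case Nil then show ?thesis using uv by auto
  next
    case (Cons x u')
    then have "w = (u' @ [c]) @ v" using uv by auto
    then show ?thesis using uv(2) in_pattern_append_left by metis
  qed
next
  assume "in_pattern cs w"
  then show "in_pattern (c # cs) (c # w)" by (simp only: in_pattern.simps) (metis append_Nil)
qed

lemma in_pattern_Cons_other:
  assumes "c \<noteq> a"
  shows "in_pattern (c # cs) (a # w) \<longleftrightarrow> in_pattern (c # cs) w"
proof
  assume "in_pattern (c # cs) (a # w)"
  then obtain u v where uv: "a # w = u @ c # v" "in_pattern cs v" by auto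
  then obtain u' where "u = a # u'" using assms by (cases u) auto
  then show "in_pattern (c # cs) w" using uv by auto
next
  assume "in_pattern (c # cs) w"
  then obtain u v where "w = u @ c # v" "in_pattern cs v" by auto
  then have "a # w = (a # u) @ c # v" "in_pattern cs v" by simp_all
  then show "in_pattern (c # cs) (a # w)" by (simp only: in_pattern.simps) blast
qed

definition match_step :: "'a list \<Rightarrow> 'a \<Rightarrow> nat \<Rightarrow> nat" where
  "match_step z a p = (if p < length z \<and> z ! p = a then Suc p else p)"

definition matched_length :: "'a list \<Rightarrow> 'a list \<Rightarrow> nat" where
  "matched_length z w = fold (match_step z) w 0"

lemma fold_match_step_le: "p \<le> length z \<Longrightarrow> fold (match_step z) w p \<le> length z"
  by (induction w arbitrary: p) (auto simp: match_step_def)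

lemma fold_match_step_length: "fold (match_step z) w (length z) = length z"
  by (induction w) (auto simp: match_step_def)

lemma fold_match_step_eq_length_iff:
  "p \<le> length z \<Longrightarrow> fold (match_step z) w p = length z \<longleftrightarrow> in_pattern (drop p z) w"
proof (induction w arbitrary: p)
  case Nil
  then show ?case by (cases "drop p z") auto
next
  case (Cons a w)
  show ?case
  proof (cases "p < length z")
    case True
    then have dz: "drop p z = z ! p # drop (Suc p) z" by (simp add: Cons_nth_drop_Suc)
    show ?thesis
    proof (cases "z ! p = a")
      case True
      then show ?thesis
        using Cons.IH[of "Suc p"] \<open>p < length z\<close> dz in_pattern_Cons_same[of a]
        by (simp add: match_step_def)
    next
      case False
      then show ?thesis
        using Cons dz in_pattern_Cons_other[OF False] by (simp add: match_step_def)
    qed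
  next
    case False
    then have "p = length z" using Cons.prems by simp
    then show ?thesis using fold_match_step_length[of z "a # w"] by simp
  qed
qed

lemma matched_length_eq_length_iff: "matched_length z w = length z \<longleftrightarrow> in_pattern z w"
  using fold_match_step_eq_length_iff[of 0 z w] by (simp add: matched_length_def)

lemma matched_length_le: "matched_length z w \<le> length z"
  using fold_match_step_le[of 0 z w] by (simp add: matched_length_def)

lemma matched_length_snoc: "matched_length z (w @ [a]) = match_step z a (matched_length z w)"
  by (simp add: matched_length_def)

lemma piecewise_testable_normal_form:
  assumes "piecewise_testable L"
  shows "\<exists>Zs (F :: bool list \<Rightarrow> bool). (\<forall>z\<in>set Zs. z \<noteq> []) \<and>
     (\<forall>w. w \<in> L \<longleftrightarrow> F (map (\<lambda>z. in_pattern z w) Zs))"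
  using assms
proof (induction rule: piecewise_testable.induct)
  case (base zs)
  show ?case
  proof (cases "zs = []")
    case True
    then show ?thesis by (intro exI[of _ "[]"] exI[of _ "\<lambda>_. True"]) (auto simp: pattern_lang_def)
  next
    case False
    then show ?thesis by (intro exI[of _ "[zs]"] exI[of _ hd]) (auto simp: pattern_lang_def)
  qed
next
  case (union A B)
  then obtain Z1 F1 Z2 F2 where "\<forall>z\<in>set Z1. z \<noteq> []" "\<forall>w. w \<in> A \<longleftrightarrow> F1 (map (\<lambda>z. in_pattern z w) Z1)"
    "\<forall>z\<in>set Z2. z \<noteq> []" "\<forall>w. w \<in> B \<longleftrightarrow> F2 (map (\<lambda>z. in_pattern z w) Z2)" by metis
  then show ?case
    by (intro exI[of _ "Z1 @ Z2"] exI[of _ "\<lambda>bs. F1 (take (length Z1) bs) \<or> F2 (drop (length Z1) bs)"])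
      auto
next
  case (inter A B)
  then obtain Z1 F1 Z2 F2 where "\<forall>z\<in>set Z1. z \<noteq> []" "\<forall>w. w \<in> A \<longleftrightarrow> F1 (map (\<lambda>z. in_pattern z w) Z1)"
    "\<forall>z\<in>set Z2. z \<noteq> []" "\<forall>w. w \<in> B \<longleftrightarrow> F2 (map (\<lambda>z. in_pattern z w) Z2)" by metis
  then show ?case
    by (intro exI[of _ "Z1 @ Z2"] exI[of _ "\<lambda>bs. F1 (take (length Z1) bs) \<and> F2 (drop (length Z1) bs)"])
      auto
next
  case (compl A)
  then obtain Z1 F1 where "\<forall>z\<in>set Z1. z \<noteq> []" "\<forall>w. w \<in> A \<longleftrightarrow> F1 (map (\<lambda>z. in_pattern z w) Z1)"
    by metis
  then show ?case by (intro exI[of _ Z1] exI[of _ "\<lambda>bs. \<not> F1 bs"]) auto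
qed

section \<open>Real kernels\<close>

type_synonym kernel = "nat \<Rightarrow> nat \<Rightarrow> real"

definition kapply :: "nat \<Rightarrow> kernel \<Rightarrow> (nat \<Rightarrow> real) \<Rightarrow> nat \<Rightarrow> real" where
  "kapply n K v i = (\<Sum>j<n. K i j * v j)"

definition kmult :: "nat \<Rightarrow> kernel \<Rightarrow> kernel \<Rightarrow> kernel" where
  "kmult n K L i k = (\<Sum>j<n. K i j * L j k)"

definition dot :: "nat \<Rightarrow> (nat \<Rightarrow> real) \<Rightarrow> (nat \<Rightarrow> real) \<Rightarrow> real" where
  "dot n x y = (\<Sum>i<n. x i * y i)"

definition kid :: kernel where "kid i j = (if i = j then 1 else 0)"

definition kcompl :: "kernel \<Rightarrow> kernel" where "kcompl Q i j = kid i j - Q i j"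

definition mat_of_kernel :: "nat \<Rightarrow> kernel \<Rightarrow> complex mat" where
  "mat_of_kernel n K = mat n n (\<lambda>(i,j). complex_of_real (K i j))"

definition vec_of_real :: "nat \<Rightarrow> (nat \<Rightarrow> real) \<Rightarrow> complex vec" where
  "vec_of_real n v = vec n (\<lambda>i. complex_of_real (v i))"

lemma kapply_cong: "(\<And>j. j < n \<Longrightarrow> v j = w j) \<Longrightarrow> kapply n K v i = kapply n K w i"
  by (simp add: kapply_def)

lemma kapply_zero[simp]: "kapply n K (\<lambda>_. 0) i = 0"
  by (simp add: kapply_def)

lemma sum_kid_left: "i < n \<Longrightarrow> (\<Sum>j<n. kid i j * f j) = (f i :: real)"
  by (simp add: kid_def if_distrib[of "\<lambda>c. c * _"] sum.delta cong: if_cong)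

lemma sum_kid_right: "i < n \<Longrightarrow> (\<Sum>j<n. f j * kid j i) = (f i :: real)"
  by (simp add: kid_def if_distrib[of "\<lambda>c. _ * c"] sum.delta' cong: if_cong)

lemma kapply_kid[simp]: "i < n \<Longrightarrow> kapply n kid v i = v i"
  by (simp add: kapply_def sum_kid_left)

lemma kapply_kcompl: "i < n \<Longrightarrow> kapply n (kcompl Q) v i = v i - kapply n Q v i"
  by (simp add: kapply_def kcompl_def left_diff_distrib sum_subtractf sum_kid_left)

lemma kmult_kid_left[simp]: "i < n \<Longrightarrow> kmult n kid K i k = K i k"
  by (simp add: kmult_def sum_kid_left)

lemma kmult_kid_right[simp]: "k < n \<Longrightarrow> kmult n K kid i k = K i k"
  by (simp add: kmult_def sum_kid_right)

lemma kmult_kcompl_left: "i < n \<Longrightarrow> kmult n (kcompl Q) K i k = K i k - kmult n Q K i k"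
  by (simp add: kmult_def kcompl_def left_diff_distrib sum_subtractf sum_kid_left)

lemma kmult_kcompl_right: "k < n \<Longrightarrow> kmult n K (kcompl Q) i k = K i k - kmult n K Q i k"
  by (simp add: kmult_def kcompl_def right_diff_distrib sum_subtractf sum_kid_right)

lemma kcompl_sym: "(\<And>i j. Q i j = Q j i) \<Longrightarrow> kcompl Q i j = kcompl Q j i"
  by (simp add: kcompl_def kid_def)

lemma kcompl_idem:
  "(\<And>i k. kmult n Q Q i k = Q i k) \<Longrightarrow> i < n \<Longrightarrow> k < n \<Longrightarrow>
    kmult n (kcompl Q) (kcompl Q) i k = kcompl Q i k"
  by (simp add: kmult_kcompl_left kmult_kcompl_right kcompl_def)

lemma mat_of_kernel_carrier[simp]: "mat_of_kernel n K \<in> carrier_mat n n"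
  by (simp add: mat_of_kernel_def)

lemma vec_of_real_carrier[simp]: "vec_of_real n v \<in> carrier_vec n"
  by (simp add: vec_of_real_def)

lemma mat_of_kernel_mult: "mat_of_kernel n K * mat_of_kernel n L = mat_of_kernel n (kmult n K L)"
  by (rule eq_matI) (auto simp: mat_of_kernel_def kmult_def scalar_prod_def row_def col_def
      intro!: sum.cong simp flip: of_real_mult of_real_sum)

lemma mat_of_kernel_mult_vec: "mat_of_kernel n K *\<^sub>v vec_of_real n v = vec_of_real n (kapply n K v)"
  by (rule eq_vecI) (auto simp: mat_of_kernel_def vec_of_real_def kapply_def scalar_prod_def row_def
      intro!: sum.cong simp flip: of_real_mult of_real_sum)

lemma vec_of_real_cong: "(\<And>i. i < n \<Longrightarrow> v i = w i) \<Longrightarrow> vec_of_real n v = vec_of_real n w"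
  by (auto simp: vec_of_real_def)

lemma mat_of_kernel_cong:
  "(\<And>i j. i < n \<Longrightarrow> j < n \<Longrightarrow> K i j = L i j) \<Longrightarrow> mat_of_kernel n K = mat_of_kernel n L"
  by (auto simp: mat_of_kernel_def)

lemma proj_vec_of_real: "proj S (vec_of_real n v) = vec_of_real n (\<lambda>i. if i \<in> S then v i else 0)"
  by (auto simp: proj_def vec_of_real_def)

lemma sqnorm_vec_of_real: "sqnorm (vec_of_real n v) = (\<Sum>i<n. (v i)\<^sup>2)"
  by (simp add: sqnorm_def vec_of_real_def)

lemma zero_vec_of_real: "0\<^sub>v n = vec_of_real n (\<lambda>_. 0)"
  by (auto simp: vec_of_real_def)

lemma basis_ket_vec_of_real: "basis_ket n q = vec_of_real n (\<lambda>i. if i = q then 1 else 0)"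
  by (auto simp: basis_ket_def vec_of_real_def)

lemma adjoint_mat_of_kernel: "adjoint_mat (mat_of_kernel n K) = mat_of_kernel n (\<lambda>i j. K j i)"
  by (auto simp: adjoint_mat_def mat_of_kernel_def)

lemma unitary_mat_of_kernel_involution:
  assumes "\<And>i j. i < n \<Longrightarrow> j < n \<Longrightarrow> K i j = K j i"
    and "\<And>i k. i < n \<Longrightarrow> k < n \<Longrightarrow> kmult n K K i k = kid i k"
  shows "unitary_mat n (mat_of_kernel n K)"
proof -
  have "adjoint_mat (mat_of_kernel n K) = mat_of_kernel n K"
    unfolding adjoint_mat_of_kernel by (rule mat_of_kernel_cong) (use assms(1) in auto)
  moreover have "mat_of_kernel n K * mat_of_kernel n K = 1\<^sub>m n"
    unfolding mat_of_kernel_mult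
    by (rule eq_matI) (auto simp: mat_of_kernel_def assms(2) kid_def)
  ultimately show ?thesis by (simp add: unitary_mat_def)
qed

lemma adjoint_mat_carrier: "A \<in> carrier_mat n n \<Longrightarrow> adjoint_mat A \<in> carrier_mat n n"
  by (auto simp: adjoint_mat_def)

lemma adjoint_mat_mult:
  assumes "A \<in> carrier_mat n n" "B \<in> carrier_mat n n"
  shows "adjoint_mat (A * B) = adjoint_mat B * adjoint_mat A"
  using assms
  by (intro eq_matI) (auto simp: adjoint_mat_def scalar_prod_def row_def col_def
      intro!: sum.cong simp: mult.commute)

lemma unitary_mat_mult:
  assumes "unitary_mat n A" "unitary_mat n B"
  shows "unitary_mat n (A * B)"
proof -
  have A: "A \<in> carrier_mat n n" and B: "B \<in> carrier_mat n n"
    and A': "adjoint_mat A \<in> carrier_mat n n" and B': "adjoint_mat B \<in> carrier_mat n n"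
    using assms adjoint_mat_carrier by (auto simp: unitary_mat_def)
  have "adjoint_mat (A * B) * (A * B) = adjoint_mat B * (adjoint_mat A * A) * B"
    using A B A' B' by (simp add: adjoint_mat_mult assoc_mult_mat[of _ n n _ n _ n])
  also have "\<dots> = 1\<^sub>m n" using assms B B' by (simp add: unitary_mat_def)
  finally have left: "adjoint_mat (A * B) * (A * B) = 1\<^sub>m n" .
  have "(A * B) * adjoint_mat (A * B) = A * (B * adjoint_mat B) * adjoint_mat A"
    using A B A' B' by (simp add: adjoint_mat_mult assoc_mult_mat[of _ n n _ n _ n])
  also have "\<dots> = 1\<^sub>m n" using assms A A' by (simp add: unitary_mat_def)
  finally have right: "(A * B) * adjoint_mat (A * B) = 1\<^sub>m n" .
  show ?thesis using left right A B by (simp add: unitary_mat_def)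
qed

section \<open>Tensor products via base-B digits\<close>

lemma sum_blocks:
  fixes b N :: nat
  shows "(\<Sum>i<b * N. g i) = (\<Sum>q<b. \<Sum>t<N. g (t + N * q) :: 'a::comm_monoid_add)"
proof -
  have "(\<Sum>i<b * N. g i) = (\<Sum>q<b. sum g {q * N..<q * N + N})"
    by (rule sum.nat_group[symmetric])
  also have "\<dots> = (\<Sum>q<b. \<Sum>t<N. g (t + N * q))"
    using sum.shift_bounds_nat_ivl[of g 0 "q * N" N for q]
    by (simp add: atLeast0LessThan add.commute mult.commute)
  finally show ?thesis .
qed

lemma prod_blocks:
  fixes b N :: nat
  shows "(\<Prod>i<b * N. g i) = (\<Prod>q<b. \<Prod>t<N. g (t + N * q) :: 'a::comm_monoid_mult)"
proof -
  have "(\<Prod>i<b * N. g i) = (\<Prod>q<b. prod g {q * N..<q * N + N})"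
    by (rule prod.nat_group[symmetric])
  also have "\<dots> = (\<Prod>q<b. \<Prod>t<N. g (t + N * q))"
    using prod.shift_bounds_nat_ivl[of g 0 "q * N" N for q]
    by (simp add: atLeast0LessThan add.commute mult.commute)
  finally show ?thesis .
qed

definition digit :: "nat \<Rightarrow> nat \<Rightarrow> nat \<Rightarrow> nat" where
  "digit B c t = t div B ^ c mod B"

lemma digit_less: "0 < B \<Longrightarrow> digit B c t < B"
  by (simp add: digit_def)

lemma digit_zero: "digit B c 0 = 0"
  by (simp add: digit_def)

lemma digit_add_high:
  assumes "0 < B" "i < B ^ G" "c < G"
  shows "digit B c (i + B ^ G * q) = digit B c i"
proof -
  have "B ^ G = B ^ c * (B * B ^ (G - Suc c))"
    using assms(3) by (simp flip: power_add power_Suc)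
  then have "(i + B ^ G * q) div B ^ c = i div B ^ c + B * (B ^ (G - Suc c) * q)"
    using assms(1) by (simp add: mult.assoc)
  then show ?thesis by (simp add: digit_def)
qed

lemma digit_top:
  assumes "0 < B" "i < B ^ G" "q < B"
  shows "digit B G (i + B ^ G * q) = q"
  using assms by (simp add: digit_def)

lemma sum_prod_digits:
  assumes "0 < B"
  shows "(\<Sum>t<B ^ G. \<Prod>c<G. f c (digit B c t)) = (\<Prod>c<G. \<Sum>v<B. f c v :: real)"
proof (induction G)
  case (Suc G)
  have "(\<Sum>t<B ^ Suc G. \<Prod>c<Suc G. f c (digit B c t))
      = (\<Sum>q<B. \<Sum>i<B ^ G. \<Prod>c<Suc G. f c (digit B c (i + B ^ G * q)))"
    by (simp add: sum_blocks mult.commute)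
  also have "\<dots> = (\<Sum>q<B. \<Sum>i<B ^ G. (\<Prod>c<G. f c (digit B c i)) * f G q)"
  proof (intro sum.cong refl)
    fix q i assume q: "q \<in> {..<B}" and i: "i \<in> {..<B ^ G}"
    have "(\<Prod>c<G. f c (digit B c (i + B ^ G * q))) = (\<Prod>c<G. f c (digit B c i))"
      by (rule prod.cong) (use assms i digit_add_high in auto)
    then show "(\<Prod>c<Suc G. f c (digit B c (i + B ^ G * q))) = (\<Prod>c<G. f c (digit B c i)) * f G q"
      using digit_top[OF assms, of i G q] q i by simp
  qed
  also have "\<dots> = (\<Prod>c<Suc G. \<Sum>v<B. f c v)"
    by (simp add: Suc.IH flip: sum_distrib_left sum_distrib_right)
  finally show ?case .
qed simp

lemma digits_zero_imp_zero:
  assumes "0 < B" "t < B ^ G" "\<forall>c<G. digit B c t = 0"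
  shows "t = 0"
  using assms(2,3)
proof (induction G arbitrary: t)
  case (Suc G)
  define i where "i = t mod B ^ G"
  define q where "q = t div B ^ G"
  have t: "t = i + B ^ G * q" by (simp add: i_def q_def)
  have i: "i < B ^ G" using assms(1) by (simp add: i_def)
  have "q < B" using Suc.prems(1) by (simp add: q_def less_mult_imp_div_less mult.commute)
  then have "q = 0" using Suc.prems(2) digit_top[OF assms(1) i] t by auto
  moreover have "i = 0"
    using Suc.IH[OF i] Suc.prems(2) digit_add_high[OF assms(1) i, of _ q] t by auto
  ultimately show ?case using t by simp
qed simp

text \<open>The product of \<open>G\<close> copies of \<open>\<real>\<^sup>B\<close> is identified with \<open>\<real>\<^sup>B\<^sup>^\<^sup>G\<close>,
  the \<open>c\<close>-th copy being read off from the \<open>c\<close>-th base-\<open>B\<close> digit of an index.\<close>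

definition tensor_kernel :: "nat \<Rightarrow> nat \<Rightarrow> (nat \<Rightarrow> kernel) \<Rightarrow> kernel" where
  "tensor_kernel B G h t t' = (\<Prod>c<G. h c (digit B c t) (digit B c t'))"

definition tensor_vec :: "nat \<Rightarrow> nat \<Rightarrow> (nat \<Rightarrow> nat \<Rightarrow> real) \<Rightarrow> nat \<Rightarrow> real" where
  "tensor_vec B G x t = (\<Prod>c<G. x c (digit B c t))"

lemma kapply_tensor:
  assumes "0 < B"
  shows "kapply (B ^ G) (tensor_kernel B G h) (tensor_vec B G x) t
    = tensor_vec B G (\<lambda>c. kapply B (h c) (x c)) t"
proof -
  have "kapply (B ^ G) (tensor_kernel B G h) (tensor_vec B G x) t
     = (\<Sum>t'<B ^ G. \<Prod>c<G. h c (digit B c t) (digit B c t') * x c (digit B c t'))"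
    by (simp add: kapply_def tensor_kernel_def tensor_vec_def prod.distrib)
  also have "\<dots> = (\<Prod>c<G. \<Sum>v<B. h c (digit B c t) v * x c v)"
    by (rule sum_prod_digits[OF assms])
  finally show ?thesis by (simp add: tensor_vec_def kapply_def)
qed

lemma kmult_tensor:
  assumes "0 < B"
  shows "kmult (B ^ G) (tensor_kernel B G h) (tensor_kernel B G h') t t''
    = tensor_kernel B G (\<lambda>c. kmult B (h c) (h' c)) t t''"
proof -
  have "kmult (B ^ G) (tensor_kernel B G h) (tensor_kernel B G h') t t''
     = (\<Sum>t'<B ^ G. \<Prod>c<G. h c (digit B c t) (digit B c t') * h' c (digit B c t') (digit B c t''))"
    by (simp add: kmult_def tensor_kernel_def prod.distrib)
  also have "\<dots> = (\<Prod>c<G. \<Sum>v<B. h c (digit B c t) v * h' c v (digit B c t''))"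
    by (rule sum_prod_digits[OF assms])
  finally show ?thesis by (simp add: tensor_kernel_def kmult_def)
qed

lemma dot_tensor:
  assumes "0 < B"
  shows "dot (B ^ G) (tensor_vec B G x) (tensor_vec B G y) = (\<Prod>c<G. dot B (x c) (y c))"
proof -
  have "dot (B ^ G) (tensor_vec B G x) (tensor_vec B G y)
     = (\<Sum>t<B ^ G. \<Prod>c<G. x c (digit B c t) * y c (digit B c t))"
    by (simp add: dot_def tensor_vec_def prod.distrib)
  also have "\<dots> = (\<Prod>c<G. dot B (x c) (y c))"
    unfolding dot_def by (rule sum_prod_digits[OF assms])
  finally show ?thesis .
qed

lemma tensor_kernel_sym:
  assumes "0 < B" "\<And>c i j. c < G \<Longrightarrow> i < B \<Longrightarrow> j < B \<Longrightarrow> h c i j = h c j i"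
  shows "tensor_kernel B G h t t' = tensor_kernel B G h t' t"
  unfolding tensor_kernel_def by (rule prod.cong) (auto intro!: assms(2) digit_less[OF assms(1)])

lemma tensor_kernel_idem:
  assumes "0 < B"
    and "\<And>c i j. c < G \<Longrightarrow> i < B \<Longrightarrow> j < B \<Longrightarrow> kmult B (h c) (h c) i j = h c i j"
  shows "kmult (B ^ G) (tensor_kernel B G h) (tensor_kernel B G h) t t' = tensor_kernel B G h t t'"
  unfolding kmult_tensor[OF assms(1)] unfolding tensor_kernel_def
  by (rule prod.cong) (auto intro!: assms(2) digit_less[OF assms(1)])

lemma tensor_vec_basis_zero:
  assumes "0 < B" "t < B ^ G"
  shows "tensor_vec B G (\<lambda>c v. if v = 0 then 1 else 0) t = (if t = 0 then 1 else 0)"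
proof (cases "t = 0")
  case False
  then obtain c where "c < G" "digit B c t \<noteq> 0" using digits_zero_imp_zero[OF assms] by auto
  then show ?thesis using False by (auto simp: tensor_vec_def intro!: prod_zero)
qed (simp add: tensor_vec_def digit_zero)

section \<open>Unitary dilation of a projection\<close>

definition block_kernel :: "nat \<Rightarrow> (nat \<Rightarrow> nat \<Rightarrow> kernel) \<Rightarrow> kernel" where
  "block_kernel N blk i j = blk (i div N) (j div N) (i mod N) (j mod N)"

definition block_vec :: "nat \<Rightarrow> (nat \<Rightarrow> nat \<Rightarrow> real) \<Rightarrow> nat \<Rightarrow> real" where
  "block_vec N vb i = vb (i div N) (i mod N)"

lemma kapply_block_kernel:
  assumes "0 < N"
  shows "kapply (b * N) (block_kernel N blk) (block_vec N vb) i
    = (\<Sum>q<b. kapply N (blk (i div N) q) (vb q) (i mod N))"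
  unfolding kapply_def sum_blocks using assms
  by (auto simp: block_kernel_def block_vec_def intro!: sum.cong)

lemma kmult_block_kernel:
  assumes "0 < N"
  shows "kmult (b * N) (block_kernel N blk) (block_kernel N blk') i k
    = (\<Sum>q<b. kmult N (blk (i div N) q) (blk' q (k div N)) (i mod N) (k mod N))"
  unfolding kmult_def sum_blocks using assms
  by (auto simp: block_kernel_def intro!: sum.cong)

text \<open>For a projection \<open>Q\<close> this is the reflection \<open>[[Q, I - Q], [I - Q, Q]]\<close> on the
  blocks \<open>0\<close> and \<open>\<beta>\<close> (the identity on the others): applied to a vector supported in
  block \<open>0\<close>, it keeps the \<open>Q\<close>-part there and moves the rest into block \<open>\<beta>\<close>.\<close>

definition reflection_block :: "kernel \<Rightarrow> nat \<Rightarrow> nat \<Rightarrow> nat \<Rightarrow> kernel" where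
  "reflection_block Q \<beta> b b' =
    (if b \<in> {0, \<beta>} \<and> b' \<in> {0, \<beta>} then (if b = b' then Q else kcompl Q)
     else if b = b' then kid else (\<lambda>_ _. 0))"

definition block_reflection :: "nat \<Rightarrow> kernel \<Rightarrow> nat \<Rightarrow> kernel" where
  "block_reflection N Q \<beta> = block_kernel N (reflection_block Q \<beta>)"

lemma kmult_zero_left[simp]: "kmult n (\<lambda>_ _. 0) K i k = 0"
  by (simp add: kmult_def)

lemma kmult_zero_right[simp]: "kmult n K (\<lambda>_ _. 0) i k = 0"
  by (simp add: kmult_def)

lemma sum_four: "(\<Sum>q<(4::nat). f q) = f 0 + f 1 + f 2 + (f 3 :: real)"
  by (simp add: eval_nat_numeral)

lemma block_reflection_sym:
  assumes "\<And>t t'. t < N \<Longrightarrow> t' < N \<Longrightarrow> Q t t' = Q t' t" "0 < N"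
  shows "block_reflection N Q \<beta> i j = block_reflection N Q \<beta> j i"
  using assms
  by (auto simp: block_reflection_def block_kernel_def reflection_block_def kcompl_def kid_def)

lemma block_reflection_involution:
  assumes sym: "\<And>t t'. t < N \<Longrightarrow> t' < N \<Longrightarrow> Q t t' = Q t' t"
    and idem: "\<And>t t'. t < N \<Longrightarrow> t' < N \<Longrightarrow> kmult N Q Q t t' = Q t t'"
    and N: "0 < N" and \<beta>: "\<beta> \<in> {1, 2, 3}" and i: "i < 4 * N" and k: "k < 4 * N"
  shows "kmult (4 * N) (block_reflection N Q \<beta>) (block_reflection N Q \<beta>) i k = kid i k"
proof -
  define b t b' t' where "b = i div N" "t = i mod N" "b' = k div N" "t' = k mod N"
  have "b < 4" "b' < 4" using i k N by (simp_all add: b_t_b'_t'_def less_mult_imp_div_less)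
  then have b: "b \<in> {0, 1, 2, 3}" and b': "b' \<in> {0, 1, 2, 3}" by auto
  have t: "t < N" and t': "t' < N" using N by (auto simp: b_t_b'_t'_def)
  have "i = k \<longleftrightarrow> b = b' \<and> t = t'"
    by (metis b_t_b'_t'_def div_mult_mod_eq)
  moreover have "kmult N Q (kcompl Q) t t' = 0" "kmult N (kcompl Q) Q t t' = 0"
    "kmult N (kcompl Q) (kcompl Q) t t' = kcompl Q t t'" "kmult N Q Q t t' = Q t t'"
    using t t' idem by (simp_all add: kmult_kcompl_left kmult_kcompl_right kcompl_def)
  moreover have "kmult (4 * N) (block_reflection N Q \<beta>) (block_reflection N Q \<beta>) i k
      = (\<Sum>q<4. kmult N (reflection_block Q \<beta> b q) (reflection_block Q \<beta> q b') t t')"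
    unfolding block_reflection_def kmult_block_kernel[OF N] b_t_b'_t'_def ..
  ultimately show ?thesis
    unfolding sum_four using b b' \<beta> t t'
    by (elim insertE; simp add: reflection_block_def; simp add: kcompl_def kid_def)
qed

lemma unitary_block_reflection:
  assumes "\<And>t t'. t < N \<Longrightarrow> t' < N \<Longrightarrow> Q t t' = Q t' t"
    and "\<And>t t'. t < N \<Longrightarrow> t' < N \<Longrightarrow> kmult N Q Q t t' = Q t t'"
    and "0 < N" and "\<beta> \<in> {1, 2, 3}"
  shows "unitary_mat (4 * N) (mat_of_kernel (4 * N) (block_reflection N Q \<beta>))"
  by (rule unitary_mat_of_kernel_involution[OF block_reflection_sym[OF assms(1,3)]
        block_reflection_involution[OF assms]])

lemma kapply_block_reflection:
  assumes N: "0 < N" and \<beta>: "\<beta> \<in> {1, 2, 3}" and i: "i < 4 * N"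
  defines "b \<equiv> i div N" and "t \<equiv> i mod N"
  shows "kapply (4 * N) (block_reflection N Q \<beta>) (block_vec N vb) i =
    (if b = 0 then kapply N Q (vb 0) t + (vb \<beta> t - kapply N Q (vb \<beta>) t)
     else if b = \<beta> then (vb 0 t - kapply N Q (vb 0) t) + kapply N Q (vb \<beta>) t
     else vb b t)"
proof -
  have "b < 4" using i N by (simp add: b_def less_mult_imp_div_less)
  then have b: "b \<in> {0, 1, 2, 3}" by auto
  have t: "t < N" using N by (simp add: t_def)
  have "kapply (4 * N) (block_reflection N Q \<beta>) (block_vec N vb) i
      = (\<Sum>q<4. kapply N (reflection_block Q \<beta> b q) (vb q) t)"
    unfolding block_reflection_def kapply_block_kernel[OF N] b_def t_def ..
  then show ?thesis
    unfolding sum_four using b \<beta> t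
    by (elim insertE; simp add: reflection_block_def kapply_kcompl; simp add: kapply_def)
qed

section \<open>Pair averaging\<close>

definition pair_avg :: "(nat \<Rightarrow> bool) \<Rightarrow> nat \<Rightarrow> kernel" where
  "pair_avg act ofs i j =
    (if ofs \<le> i \<and> act ((i - ofs) div 2)
     then (if ofs \<le> j \<and> (i - ofs) div 2 = (j - ofs) div 2 then 1/2 else 0)
     else kid i j)"

lemma pair_avg_apply:
  fixes x :: "nat \<Rightarrow> real"
  assumes wf: "\<And>l. act l \<Longrightarrow> ofs + 2 * l + 1 < B" and i: "i < B"
  shows "kapply B (pair_avg act ofs) x i =
    (if ofs \<le> i \<and> act ((i - ofs) div 2)
     then (x (ofs + 2 * ((i - ofs) div 2)) + x (ofs + 2 * ((i - ofs) div 2) + 1)) / 2 else x i)"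
proof (cases "ofs \<le> i \<and> act ((i - ofs) div 2)")
  case True
  define l where "l = (i - ofs) div 2"
  have "ofs + 2 * l + 1 < B" using wf True by (simp add: l_def)
  then have pair: "{j. j < B \<and> ofs \<le> j \<and> (j - ofs) div 2 = l} = {ofs + 2 * l, ofs + 2 * l + 1}"
    by auto
  have "kapply B (pair_avg act ofs) x i
      = (\<Sum>j<B. if ofs \<le> j \<and> (j - ofs) div 2 = l then x j / 2 else 0)"
    unfolding kapply_def by (rule sum.cong) (use True in \<open>auto simp: pair_avg_def l_def\<close>)
  also have "\<dots> = (\<Sum>j\<in>{j. j < B \<and> ofs \<le> j \<and> (j - ofs) div 2 = l}. x j / 2)"
    by (simp add: sum.If_cases Int_def lessThan_def conj_commute)
  also have "\<dots> = (x (ofs + 2 * l) + x (ofs + 2 * l + 1)) / 2"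
    unfolding pair by (simp add: add_divide_distrib)
  finally show ?thesis using True by (simp add: l_def)
next
  case False
  have "kapply B (pair_avg act ofs) x i = kapply B kid x i"
    unfolding kapply_def by (rule sum.cong) (use False in \<open>auto simp: pair_avg_def\<close>)
  then show ?thesis using i by (subst if_not_P[OF False]) simp
qed

lemma pair_avg_apply_pair:
  assumes wf: "\<And>l. act l \<Longrightarrow> ofs + 2 * l + 1 < B"
    and "act l" and "i = ofs + 2 * l \<or> i = ofs + 2 * l + 1"
  shows "kapply B (pair_avg act ofs) x i = (x (ofs + 2 * l) + x (ofs + 2 * l + 1)) / 2"
proof -
  have "i < B" "ofs \<le> i" "(i - ofs) div 2 = l" using assms(3) wf[OF \<open>act l\<close>] by auto
  then show ?thesis using pair_avg_apply[of act ofs B, OF wf \<open>i < B\<close>] assms(2,3) by auto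
qed

lemma pair_avg_apply_unpaired:
  assumes wf: "\<And>l. act l \<Longrightarrow> ofs + 2 * l + 1 < B" and "i < B"
    and "\<And>l. act l \<Longrightarrow> i \<noteq> ofs + 2 * l \<and> i \<noteq> ofs + 2 * l + 1"
  shows "kapply B (pair_avg act ofs) x i = x i"
proof -
  have "\<not> (ofs \<le> i \<and> act ((i - ofs) div 2))"
  proof
    assume *: "ofs \<le> i \<and> act ((i - ofs) div 2)"
    then have "ofs \<le> i" by simp
    then have "i = ofs + 2 * ((i - ofs) div 2) \<or> i = ofs + 2 * ((i - ofs) div 2) + 1" by presburger
    then show False using assms(3) * by blast
  qed
  then show ?thesis using pair_avg_apply[of act ofs B, OF wf assms(2)] by (simp only: if_False)
qed

lemma pair_avg_sym: "pair_avg act ofs i j = pair_avg act ofs j i"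
  unfolding pair_avg_def kid_def by auto

lemma pair_avg_idem:
  assumes wf: "\<And>l. act l \<Longrightarrow> ofs + 2 * l + 1 < B" and "i < B"
  shows "kmult B (pair_avg act ofs) (pair_avg act ofs) i k = pair_avg act ofs i k"
proof -
  have "kmult B (pair_avg act ofs) (pair_avg act ofs) i k
      = kapply B (pair_avg act ofs) (\<lambda>j. pair_avg act ofs j k) i"
    by (simp add: kmult_def kapply_def)
  also have "\<dots> = pair_avg act ofs i k"
    using pair_avg_apply[of act ofs B, OF assms, where x="\<lambda>j. pair_avg act ofs j k"]
    by (auto simp: pair_avg_def kid_def)
  finally show ?thesis .
qed

lemma sum_kapply_pair_avg:
  fixes x :: "nat \<Rightarrow> real"
  assumes wf: "\<And>l. act l \<Longrightarrow> ofs + 2 * l + 1 < B"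
  shows "(\<Sum>i<B. kapply B (pair_avg act ofs) x i) = (\<Sum>i<B. x i)"
proof -
  have row: "(\<Sum>i<B. pair_avg act ofs j i) = 1" if "j < B" for j
    using pair_avg_apply[of act ofs B, OF wf that, where x="\<lambda>_. 1"] by (simp add: kapply_def)
  have "(\<Sum>i<B. kapply B (pair_avg act ofs) x i) = (\<Sum>j<B. x j * (\<Sum>i<B. pair_avg act ofs j i))"
    unfolding kapply_def
    by (subst sum.swap) (simp add: sum_distrib_left pair_avg_sym mult.commute)
  also have "\<dots> = (\<Sum>j<B. x j)"
    by (simp add: row)
  finally show ?thesis .
qed

definition plateau :: "nat \<Rightarrow> (nat \<Rightarrow> real) \<Rightarrow> nat \<Rightarrow> real \<Rightarrow> bool" where
  "plateau B x s \<mu> \<longleftrightarrow>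
    (\<forall>i<B. 0 \<le> x i) \<and> (\<forall>i<B. i \<le> s \<longrightarrow> \<mu> \<le> x i) \<and> (\<forall>i<B. s < i \<longrightarrow> x i = 0)"

lemma kapply_pair_avg_nonneg:
  "plateau B x s \<mu> \<Longrightarrow> 0 \<le> kapply B (pair_avg act ofs) x i"
  unfolding kapply_def plateau_def pair_avg_def kid_def by (auto intro!: sum_nonneg)

lemma kapply_pair_avg_ge:
  assumes wf: "\<And>l. act l \<Longrightarrow> ofs + 2 * l + 1 < B" and x: "plateau B x s \<mu>"
    and "i < B" "i \<le> s"
    and below: "\<And>l. act l \<Longrightarrow> i = ofs + 2 * l \<or> i = ofs + 2 * l + 1 \<Longrightarrow> ofs + 2 * l + 1 \<le> s"
  shows "\<mu> \<le> kapply B (pair_avg act ofs) x i"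
proof (cases "\<exists>l. act l \<and> (i = ofs + 2 * l \<or> i = ofs + 2 * l + 1)")
  case True
  then obtain l where l: "act l" "i = ofs + 2 * l \<or> i = ofs + 2 * l + 1" by blast
  then have "\<mu> \<le> x (ofs + 2 * l)" "\<mu> \<le> x (ofs + 2 * l + 1)"
    using below[OF l] x wf[OF l(1)] by (auto simp: plateau_def)
  then show ?thesis using pair_avg_apply_pair[of act ofs B l i x, OF wf l] by simp
next
  case False
  then show ?thesis
    using pair_avg_apply_unpaired[OF wf \<open>i < B\<close>] x \<open>i < B\<close> \<open>i \<le> s\<close> by (auto simp: plateau_def)
qed

lemma kapply_pair_avg_eq_0:
  assumes wf: "\<And>l. act l \<Longrightarrow> ofs + 2 * l + 1 < B" and x: "plateau B x s \<mu>"
    and "i < B" "s < i"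
    and above: "\<And>l. act l \<Longrightarrow> i = ofs + 2 * l \<or> i = ofs + 2 * l + 1 \<Longrightarrow> s < ofs + 2 * l"
  shows "kapply B (pair_avg act ofs) x i = 0"
proof (cases "\<exists>l. act l \<and> (i = ofs + 2 * l \<or> i = ofs + 2 * l + 1)")
  case True
  then obtain l where l: "act l" "i = ofs + 2 * l \<or> i = ofs + 2 * l + 1" by blast
  then have "x (ofs + 2 * l) = 0" "x (ofs + 2 * l + 1) = 0"
    using above[OF l] x wf[OF l(1)] by (auto simp: plateau_def)
  then show ?thesis using pair_avg_apply_pair[of act ofs B l i x, OF wf l] by simp
next
  case False
  then show ?thesis
    using pair_avg_apply_unpaired[OF wf \<open>i < B\<close>] x \<open>i < B\<close> \<open>s < i\<close> by (auto simp: plateau_def)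
qed

lemma plateau_pair_avg_extend:
  assumes wf: "\<And>l. act l \<Longrightarrow> ofs + 2 * l + 1 < B" and x: "plateau B x s \<mu>" and "0 \<le> \<mu>"
    and s: "s = ofs + 2 * l\<^sub>0" "act l\<^sub>0"
  shows "plateau B (kapply B (pair_avg act ofs) x) (Suc s) (\<mu> / 2)"
  unfolding plateau_def
proof (intro conjI allI impI)
  fix i assume "i < B"
  show "0 \<le> kapply B (pair_avg act ofs) x i" by (rule kapply_pair_avg_nonneg[OF x])
  show "\<mu> / 2 \<le> kapply B (pair_avg act ofs) x i" if "i \<le> Suc s"
  proof (cases "i = s \<or> i = Suc s")
    case True
    have "Suc s < B" using wf s by simp
    then have "\<mu> \<le> x s" "0 \<le> x (Suc s)" using x by (auto simp: plateau_def)
    then show ?thesis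
      using pair_avg_apply_pair[of act ofs B l\<^sub>0 i x, OF wf s(2)] True s(1) by auto
  next
    case False
    then have "i < s" using that by simp
    have "\<mu> \<le> kapply B (pair_avg act ofs) x i"
      by (rule kapply_pair_avg_ge[OF wf x \<open>i < B\<close>]) (use \<open>i < s\<close> s(1) in \<open>simp_all, arith\<close>)
    then show ?thesis using \<open>0 \<le> \<mu>\<close> by linarith
  qed
  show "kapply B (pair_avg act ofs) x i = 0" if "Suc s < i"
    by (rule kapply_pair_avg_eq_0[OF wf x \<open>i < B\<close>]) (use that in auto)
qed

lemma plateau_pair_avg_keep:
  assumes wf: "\<And>l. act l \<Longrightarrow> ofs + 2 * l + 1 < B" and x: "plateau B x s \<mu>"
    and s: "\<And>l. act l \<Longrightarrow> s \<noteq> ofs + 2 * l"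
  shows "plateau B (kapply B (pair_avg act ofs) x) s \<mu>"
  unfolding plateau_def
proof (intro conjI allI impI)
  fix i assume "i < B"
  show "0 \<le> kapply B (pair_avg act ofs) x i" by (rule kapply_pair_avg_nonneg[OF x])
  show "\<mu> \<le> kapply B (pair_avg act ofs) x i" if "i \<le> s"
  proof (rule kapply_pair_avg_ge[OF wf x \<open>i < B\<close> that])
    fix l assume "act l" "i = ofs + 2 * l \<or> i = ofs + 2 * l + 1"
    then show "ofs + 2 * l + 1 \<le> s" using that s[OF \<open>act l\<close>] by auto
  qed
  show "kapply B (pair_avg act ofs) x i = 0" if "s < i"
  proof (rule kapply_pair_avg_eq_0[OF wf x \<open>i < B\<close> that])
    fix l assume "act l" "i = ofs + 2 * l \<or> i = ofs + 2 * l + 1"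
    then show "s < ofs + 2 * l" using that s[OF \<open>act l\<close>] by auto
  qed
qed

section \<open>The chain of one pattern\<close>

definition letter_at :: "'a list \<Rightarrow> 'a \<Rightarrow> nat \<Rightarrow> bool" where
  "letter_at z a l \<longleftrightarrow> l < length z \<and> z ! l = a"

definition chain_step :: "nat \<Rightarrow> 'a list \<Rightarrow> 'a \<Rightarrow> (nat \<Rightarrow> real) \<Rightarrow> nat \<Rightarrow> real" where
  "chain_step B z a x = kapply B (pair_avg (letter_at z a) 1) (kapply B (pair_avg (letter_at z a) 0) x)"

definition chain_state :: "nat \<Rightarrow> 'a list \<Rightarrow> 'a list \<Rightarrow> nat \<Rightarrow> real" where
  "chain_state B z w = fold (chain_step B z) w (\<lambda>i. if i = 0 then 1 else 0)"

definition chain_inv :: "nat \<Rightarrow> (nat \<Rightarrow> real) \<Rightarrow> nat \<Rightarrow> bool" where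
  "chain_inv B x p \<longleftrightarrow> plateau B x (2 * p) ((1/4) ^ p) \<and> (\<Sum>i<B. x i) = 1"

lemma chain_inv_step:
  assumes zB: "2 * length z < B" and inv: "chain_inv B x p"
  shows "chain_inv B (chain_step B z a x) (match_step z a p)"
proof -
  define y where "y = kapply B (pair_avg (letter_at z a) 0) x"
  have wf: "letter_at z a l \<Longrightarrow> Suc (2 * l) < B" "letter_at z a l \<Longrightarrow> Suc (Suc (2 * l)) < B"
    for l using zB by (auto simp: letter_at_def)
  have x: "plateau B x (2 * p) ((1/4) ^ p)" using inv by (simp add: chain_inv_def)
  have "(\<Sum>i<B. chain_step B z a x i) = (\<Sum>i<B. y i)"
    unfolding chain_step_def y_def[symmetric] by (rule sum_kapply_pair_avg) (simp add: wf)
  also have "\<dots> = (\<Sum>i<B. x i)"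
    unfolding y_def by (rule sum_kapply_pair_avg) (simp add: wf)
  finally have sum: "(\<Sum>i<B. chain_step B z a x i) = 1" using inv by (simp add: chain_inv_def)
  show ?thesis
  proof (cases "letter_at z a p")
    case True
    have "plateau B y (Suc (2 * p)) ((1/4) ^ p / 2)"
      unfolding y_def by (rule plateau_pair_avg_extend[where l\<^sub>0 = p]) (simp_all add: wf x True)
    then have "plateau B (chain_step B z a x) (Suc (Suc (2 * p))) ((1/4) ^ p / 2 / 2)"
      unfolding chain_step_def y_def[symmetric]
      by (intro plateau_pair_avg_extend[where l\<^sub>0 = p]) (simp_all add: wf True)
    moreover have "match_step z a p = Suc p" using True by (simp add: match_step_def letter_at_def)
    ultimately show ?thesis using sum by (simp add: chain_inv_def)
  next
    case False
    have "plateau B y (2 * p) ((1/4) ^ p)"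
      unfolding y_def by (rule plateau_pair_avg_keep) (use False wf x in auto)
    moreover have "2 * p \<noteq> 1 + 2 * l" for l :: nat by presburger
    ultimately have "plateau B (chain_step B z a x) (2 * p) ((1/4) ^ p)"
      unfolding chain_step_def y_def[symmetric] by (intro plateau_pair_avg_keep) (simp_all add: wf)
    moreover have "match_step z a p = p" using False by (simp add: match_step_def letter_at_def)
    ultimately show ?thesis using sum by (simp add: chain_inv_def)
  qed
qed

lemma chain_inv_chain_state:
  assumes "2 * length z < B"
  shows "chain_inv B (chain_state B z w) (matched_length z w)"
proof (induction w rule: rev_induct)
  case Nil
  have "(\<Sum>i<B. if i = 0 then 1 else 0 :: real) = 1" using assms by (simp add: sum.delta)
  then show ?case by (auto simp: chain_inv_def plateau_def chain_state_def matched_length_def)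
next
  case (snoc a w)
  have "chain_state B z (w @ [a]) = chain_step B z a (chain_state B z w)"
    by (simp add: chain_state_def)
  then show ?case using chain_inv_step[OF assms snoc] by (simp add: matched_length_snoc)
qed

section \<open>Measuring one chain\<close>

definition end_vec :: "nat \<Rightarrow> nat \<Rightarrow> real" where
  "end_vec k i = (if i = 2 * k then 1 else 0)"

definition open_vec :: "nat \<Rightarrow> nat \<Rightarrow> real" where
  "open_vec k i = (if i < 2 * k then 1 / sqrt (2 * k) else 0)"

definition flat_vec :: "nat \<Rightarrow> nat \<Rightarrow> real" where
  "flat_vec k i = (if i \<le> 2 * k then 1 / sqrt (2 * k + 1) else 0)"

definition signed_vec :: "nat \<Rightarrow> nat \<Rightarrow> real" where
  "signed_vec k i =
    (if i < 2 * k then 1 / sqrt (2 * k + 1) else if i = 2 * k then - 1 / sqrt (2 * k + 1) else 0)"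

lemma sum_if_less_const: "M \<le> B \<Longrightarrow> (\<Sum>i<B. if i < M then c else 0) = real M * (c :: real)"
  by (simp add: sum.If_cases Int_absorb1 lessThan_def Collect_mono)

lemma sum_if_le_const: "M < B \<Longrightarrow> (\<Sum>i<B. if i \<le> M then c else 0) = real (Suc M) * (c :: real)"
proof -
  assume "M < B"
  then have "{..<B} \<inter> {i. i \<le> M} = {..M}" by auto
  then show ?thesis by (simp add: sum.If_cases)
qed

lemma dot_end_vec_self: "2 * k < B \<Longrightarrow> dot B (end_vec k) (end_vec k) = 1"
  by (simp add: dot_def end_vec_def if_distrib[of "\<lambda>c. c * _"] sum.delta cong: if_cong)

lemma dot_end_vec_open_vec: "dot B (end_vec k) (open_vec k) = 0"
  unfolding dot_def by (rule sum.neutral) (auto simp: end_vec_def open_vec_def)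

lemma dot_open_vec_end_vec: "dot B (open_vec k) (end_vec k) = 0"
  unfolding dot_def by (rule sum.neutral) (auto simp: end_vec_def open_vec_def)

lemma dot_open_vec_self: "2 * k < B \<Longrightarrow> 0 < k \<Longrightarrow> dot B (open_vec k) (open_vec k) = 1"
proof -
  assume "2 * k < B" "0 < k"
  have "dot B (open_vec k) (open_vec k) = (\<Sum>i<B. if i < 2 * k then 1 / real (2 * k) else 0)"
    unfolding dot_def by (rule sum.cong) (auto simp: open_vec_def)
  also have "\<dots> = 1" using \<open>2 * k < B\<close> \<open>0 < k\<close> by (simp add: sum_if_less_const)
  finally show ?thesis .
qed

lemma dot_flat_vec_self: "2 * k < B \<Longrightarrow> dot B (flat_vec k) (flat_vec k) = 1"
proof -
  assume "2 * k < B"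
  have "dot B (flat_vec k) (flat_vec k) = (\<Sum>i<B. if i \<le> 2 * k then 1 / real (2 * k + 1) else 0)"
    unfolding dot_def by (rule sum.cong) (auto simp: flat_vec_def)
  also have "\<dots> = 1" using \<open>2 * k < B\<close> by (simp add: sum_if_le_const)
  finally show ?thesis .
qed

lemma dot_signed_vec_self: "2 * k < B \<Longrightarrow> dot B (signed_vec k) (signed_vec k) = 1"
proof -
  assume "2 * k < B"
  have "dot B (signed_vec k) (signed_vec k) = (\<Sum>i<B. if i \<le> 2 * k then 1 / real (2 * k + 1) else 0)"
    unfolding dot_def by (rule sum.cong) (auto simp: signed_vec_def)
  also have "\<dots> = 1" using \<open>2 * k < B\<close> by (simp add: sum_if_le_const)
  finally show ?thesis .
qed

context
  fixes B k p :: nat and x :: "nat \<Rightarrow> real"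
  assumes inv: "chain_inv B x p" and p: "p \<le> k" and k: "2 * k < B"
begin

lemma chain_nonneg: "i < B \<Longrightarrow> 0 \<le> x i"
  using inv by (auto simp: chain_inv_def plateau_def)

lemma chain_vanishes: "i < B \<Longrightarrow> 2 * k < i \<Longrightarrow> x i = 0"
  using inv p by (auto simp: chain_inv_def plateau_def)

lemma chain_sum: "(\<Sum>i<B. x i) = 1"
  using inv by (simp add: chain_inv_def)

lemma chain_le_1: "i < B \<Longrightarrow> x i \<le> 1"
  using member_le_sum[of i "{..<B}" x] chain_nonneg chain_sum by simp

lemma chain_end_unreached: "p < k \<Longrightarrow> x (2 * k) = 0"
  using inv k by (auto simp: chain_inv_def plateau_def)

lemma chain_end_reached: "p = k \<Longrightarrow> (1/4) ^ k \<le> x (2 * k)"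
  using inv k by (auto simp: chain_inv_def plateau_def)

lemma dot_end_vec: "dot B (end_vec k) x = x (2 * k)"
  using k by (simp add: dot_def end_vec_def if_distrib[of "\<lambda>c. c * _"] sum.delta cong: if_cong)

lemma dot_flat_vec: "dot B (flat_vec k) x = 1 / sqrt (2 * k + 1)"
proof -
  have "dot B (flat_vec k) x = (\<Sum>i<B. 1 / sqrt (2 * k + 1) * x i)"
    unfolding dot_def by (rule sum.cong) (auto simp: flat_vec_def chain_vanishes)
  also have "\<dots> = 1 / sqrt (2 * k + 1)"
    by (simp only: sum_distrib_left[symmetric] chain_sum mult_1_right)
  finally show ?thesis .
qed

lemma dot_open_vec: "dot B (open_vec k) x = (1 - x (2 * k)) / sqrt (2 * k)"
proof -
  have "dot B (open_vec k) x
      = (\<Sum>i<B. 1 / sqrt (2 * k) * x i - (if i = 2 * k then 1 / sqrt (2 * k) * x i else 0))"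
    unfolding dot_def by (rule sum.cong) (auto simp: open_vec_def chain_vanishes)
  also have "\<dots> = 1 / sqrt (2 * k) - 1 / sqrt (2 * k) * x (2 * k)"
    using k by (simp only: sum_subtractf sum_distrib_left[symmetric] chain_sum) (simp add: sum.delta)
  finally show ?thesis by (simp add: diff_divide_distrib)
qed

lemma dot_signed_vec: "dot B (signed_vec k) x = (1 - 2 * x (2 * k)) / sqrt (2 * k + 1)"
proof -
  have "dot B (signed_vec k) x = (\<Sum>i<B. 1 / sqrt (2 * k + 1) * x i
      - (if i = 2 * k then 2 / sqrt (2 * k + 1) * x i else 0))"
    unfolding dot_def by (rule sum.cong) (auto simp: signed_vec_def chain_vanishes)
  also have "\<dots> = 1 / sqrt (2 * k + 1) - 2 / sqrt (2 * k + 1) * x (2 * k)"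
    using k by (simp only: sum_subtractf sum_distrib_left[symmetric] chain_sum) (simp add: sum.delta)
  finally show ?thesis by (simp add: diff_divide_distrib)
qed

text \<open>Both ends of a fully matched chain carry mass, so \<open>x (2 k)\<close> stays away from \<open>1\<close> as well.\<close>

lemma chain_end_reached_bound:
  assumes "p = k" "0 < k"
  shows "\<bar>1 - 2 * x (2 * k)\<bar> \<le> 1 - 2 * (1/4) ^ k"
proof -
  have "(1/4) ^ k \<le> x (2 * k)" using chain_end_reached assms by simp
  moreover have "(1/4) ^ k \<le> x 0" using inv assms k by (auto simp: chain_inv_def plateau_def)
  moreover have "x 0 + x (2 * k) \<le> 1"
  proof -
    have "x 0 + x (2 * k) = (\<Sum>j\<in>{0, 2 * k}. x j)" using assms by simp
    also have "\<dots> \<le> (\<Sum>j<B. x j)" by (rule sum_mono2) (use k chain_nonneg in auto)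
    finally show ?thesis using chain_sum by simp
  qed
  ultimately show ?thesis by (simp add: abs_le_iff)
qed

end

text \<open>The contribution of one pattern (measured in \<open>r\<close> copies) to the amplitude of a test
  vector, as a function of the mass \<open>t\<close> at the end of its chain; \<open>b\<close> says whether the
  test vector expects the pattern to occur.\<close>

definition pattern_amp :: "nat \<Rightarrow> nat \<Rightarrow> bool \<Rightarrow> real \<Rightarrow> real" where
  "pattern_amp r k b t = (if b then t else (1 - t) / sqrt (2 * k) * (1 - 2 * t) ^ (r - 1))"

lemma abs_open_factor_le_1:
  fixes k :: nat
  assumes "0 \<le> t" "t \<le> 1" "0 < k"
  shows "\<bar>(1 - t) / sqrt (2 * k)\<bar> \<le> 1"
proof -
  have sqrt: "1 \<le> sqrt (2 * k)" using assms(3) by simp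
  then have pos: "0 < sqrt (2 * k)" by linarith
  have "\<bar>1 - t\<bar> \<le> 1" using assms(1,2) by simp
  with sqrt have "\<bar>1 - t\<bar> \<le> sqrt (2 * k)" by linarith
  then show ?thesis unfolding abs_divide abs_of_pos[OF pos] divide_le_eq_1_pos[OF pos] .
qed

lemma pattern_amp_sq_le_1:
  assumes "0 \<le> t" "t \<le> 1" "0 < k"
  shows "(pattern_amp r k b t)\<^sup>2 \<le> 1"
proof -
  have "\<bar>pattern_amp r k b t\<bar> \<le> 1"
  proof (cases b)
    case False
    have "\<bar>(1 - 2 * t) ^ (r - 1)\<bar> \<le> 1"
      unfolding power_abs by (rule power_le_one) (use assms(1,2) in auto)
    then show ?thesis
      unfolding pattern_amp_def if_not_P[OF False] abs_mult
      by (intro mult_le_one abs_open_factor_le_1[OF assms] abs_ge_zero)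
  qed (use assms in \<open>simp add: pattern_amp_def\<close>)
  then show ?thesis by (simp add: abs_square_le_1)
qed

lemma pattern_amp_expected_occurrence:
  assumes "(1/4) ^ K \<le> t"
  shows "(1/16) ^ K \<le> (pattern_amp r k True t)\<^sup>2"
proof -
  have "((1/4::real) ^ K)\<^sup>2 \<le> t\<^sup>2" using assms by (intro power_mono) auto
  moreover have "((1/4::real) ^ K)\<^sup>2 = (1/16) ^ K"
    by (simp add: power2_eq_square flip: power_mult_distrib)
  ultimately show ?thesis by (simp add: pattern_amp_def)
qed

lemma pattern_amp_expected_absence:
  assumes "0 < k" "2 * k \<le> (16::nat) ^ K"
  shows "(1/16) ^ K \<le> (pattern_amp r k False 0)\<^sup>2"
proof -
  have "(pattern_amp r k False 0)\<^sup>2 = 1 / (2 * k)"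
    using assms(1) by (simp add: pattern_amp_def power_divide)
  moreover have "real (2 * k) \<le> real (16 ^ K)" using assms(2) by (simp only: of_nat_le_iff)
  then have "1 / (16::real) ^ K \<le> 1 / real (2 * k)"
    using assms(1) by (intro divide_left_mono) simp_all
  ultimately show ?thesis by (simp add: power_one_over)
qed

lemma pattern_amp_unexpected_absence: "pattern_amp r k True 0 = 0"
  by (simp add: pattern_amp_def)

lemma pattern_amp_unexpected_occurrence:
  assumes "0 \<le> t" "t \<le> 1" "0 < k" "\<bar>1 - 2 * t\<bar> \<le> \<rho>"
  shows "(pattern_amp r k False t)\<^sup>2 \<le> \<rho> ^ (2 * (r - 1))"
proof -
  have "\<bar>(1 - t) / sqrt (2 * k)\<bar> \<le> 1" by (rule abs_open_factor_le_1[OF assms(1-3)])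
  moreover have "\<bar>(1 - 2 * t) ^ (r - 1)\<bar> \<le> \<rho> ^ (r - 1)"
    unfolding power_abs by (rule power_mono) (use assms(4) in auto)
  ultimately have "\<bar>pattern_amp r k False t\<bar> \<le> 1 * \<rho> ^ (r - 1)"
    unfolding pattern_amp_def if_False abs_mult by (intro mult_mono) auto
  then have "\<bar>pattern_amp r k False t\<bar>\<^sup>2 \<le> (\<rho> ^ (r - 1))\<^sup>2"
    by (intro power_mono) auto
  then show ?thesis by (simp add: power_mult[symmetric] mult.commute)
qed

section \<open>Projection onto an orthonormal family\<close>

definition family_proj :: "nat \<Rightarrow> 'i set \<Rightarrow> ('i \<Rightarrow> nat \<Rightarrow> real) \<Rightarrow> kernel" where
  "family_proj n T D t t' = (\<Sum>S\<in>T. D S t * D S t')"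

lemma family_proj_sym: "family_proj n T D t t' = family_proj n T D t' t"
  by (simp add: family_proj_def mult.commute)

context
  fixes n :: nat and T :: "'i set" and D :: "'i \<Rightarrow> nat \<Rightarrow> real"
  assumes fin: "finite T"
    and orthonormal: "\<And>S S'. S \<in> T \<Longrightarrow> S' \<in> T \<Longrightarrow> dot n (D S) (D S') = (if S = S' then 1 else 0)"
begin

lemma kapply_family_proj: "kapply n (family_proj n T D) X t = (\<Sum>S\<in>T. D S t * dot n (D S) X)"
proof -
  have "kapply n (family_proj n T D) X t = (\<Sum>j<n. \<Sum>S\<in>T. D S t * (D S j * X j))"
    by (simp add: kapply_def family_proj_def sum_distrib_right mult.assoc)
  also have "\<dots> = (\<Sum>S\<in>T. D S t * dot n (D S) X)"
    by (subst sum.swap) (simp add: dot_def sum_distrib_left)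
  finally show ?thesis .
qed

lemma family_proj_idem: "kmult n (family_proj n T D) (family_proj n T D) t t'' = family_proj n T D t t''"
proof -
  have "kmult n (family_proj n T D) (family_proj n T D) t t''
      = (\<Sum>S\<in>T. D S t * dot n (D S) (\<lambda>j. family_proj n T D j t''))"
    using kapply_family_proj by (simp add: kmult_def kapply_def)
  also have "\<dots> = (\<Sum>S\<in>T. D S t * D S t'')"
  proof (rule sum.cong[OF refl])
    fix S assume S: "S \<in> T"
    have "dot n (D S) (\<lambda>j. family_proj n T D j t'') = (\<Sum>S'\<in>T. dot n (D S) (D S') * D S' t'')"
      by (simp add: dot_def family_proj_def sum_distrib_left sum_distrib_right mult.assoc
          sum.swap[of _ T])
    also have "\<dots> = (\<Sum>S'\<in>T. if S = S' then D S' t'' else 0)"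
      by (rule sum.cong) (simp_all add: orthonormal S)
    also have "\<dots> = D S t''" using S fin by simp
    finally show "D S t * dot n (D S) (\<lambda>j. family_proj n T D j t'') = D S t * D S t''" by simp
  qed
  finally show ?thesis by (simp add: family_proj_def)
qed

lemma sum_sq_kapply_family_proj:
  "(\<Sum>t<n. (kapply n (family_proj n T D) X t)\<^sup>2) = (\<Sum>S\<in>T. (dot n (D S) X)\<^sup>2)"
proof -
  define a where "a S = dot n (D S) X" for S
  have "(\<Sum>t<n. (kapply n (family_proj n T D) X t)\<^sup>2)
      = (\<Sum>t<n. (\<Sum>S\<in>T. D S t * a S) * (\<Sum>S'\<in>T. D S' t * a S'))"
    by (simp add: kapply_family_proj a_def power2_eq_square)
  also have "\<dots> = (\<Sum>S\<in>T. \<Sum>S'\<in>T. a S * a S' * dot n (D S) (D S'))"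
    by (simp add: sum_product dot_def sum_distrib_left sum.swap[of _ "{..<n}"] mult_ac)
  also have "\<dots> = (\<Sum>S\<in>T. (a S)\<^sup>2)"
    using fin by (simp add: orthonormal if_distrib sum.delta power2_eq_square cong: if_cong)
  finally show ?thesis by (simp add: a_def)
qed

end

section \<open>The automaton\<close>

lemma accepts_bounded_error_of_gap:
  assumes "0 < a" and "\<And>x. x \<in> L \<Longrightarrow> a \<le> acc_prob M x"
    and "\<And>x. x \<notin> L \<Longrightarrow> acc_prob M x \<le> a / 2"
  shows "accepts_bounded_error M L"
  unfolding accepts_bounded_error_def
proof (intro exI conjI allI impI)
  show "0 < a / 8" using assms(1) by simp
  show "3 * a / 4 + a / 8 < acc_prob M x" if "x \<in> L" for x
    using assms(1) assms(2)[OF that] by linarith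
  show "acc_prob M x < 3 * a / 4 - a / 8" if "x \<notin> L" for x
    using assms(1) assms(3)[OF that] by linarith
qed

locale pt_patterns =
  fixes Zs :: "'a list list" and F :: "bool list \<Rightarrow> bool"
  assumes nonempty: "\<And>z. z \<in> set Zs \<Longrightarrow> z \<noteq> []"
begin

definition "m = length Zs"
definition "K = Suc (sum_list (map length Zs))"
definition "B = 2 * K + 1"
definition "rho = 1 - 2 * (1/4::real) ^ K"
definition "accepting_sets = {S. S \<subseteq> {..<m} \<and> F (map (\<lambda>i. i \<in> S) [0..<m])}"
definition "matched_set w = {i. i < m \<and> in_pattern (Zs ! i) w}"

lemma B_pos: "0 < B"
  by (simp add: B_def)

lemma pattern_length:
  assumes "i < m"
  shows "0 < length (Zs ! i)" "length (Zs ! i) < K" "2 * length (Zs ! i) < B"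
proof -
  have z: "Zs ! i \<in> set Zs" using assms by (simp add: m_def)
  then have "length (Zs ! i) \<le> sum_list (map length Zs)" by (simp add: member_le_sum_list)
  then show "0 < length (Zs ! i)" "length (Zs ! i) < K" "2 * length (Zs ! i) < B"
    using nonempty[OF z] by (simp_all add: K_def B_def)
qed

lemma rho_nonneg: "0 \<le> rho"
proof -
  have "(1/4::real) ^ K \<le> (1/4) ^ 1" by (intro power_decreasing) (auto simp: K_def)
  then show ?thesis by (simp add: rho_def)
qed

lemma rho_less_1: "rho < 1"
  by (simp add: rho_def)

lemma finite_accepting_sets: "finite accepting_sets"
  by (rule finite_subset[of _ "Pow {..<m}"]) (auto simp: accepting_sets_def)

lemma card_accepting_sets: "card accepting_sets \<le> 2 ^ m"
proof -
  have "card accepting_sets \<le> card (Pow {..<m})"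
    by (rule card_mono) (auto simp: accepting_sets_def)
  then show ?thesis by (simp add: card_Pow)
qed

lemma matched_set_accepting_iff:
  "matched_set w \<in> accepting_sets \<longleftrightarrow> F (map (\<lambda>z. in_pattern z w) Zs)"
proof -
  have "map (\<lambda>i. i \<in> matched_set w) [0..<m] = map (\<lambda>z. in_pattern z w) Zs"
    by (rule nth_equalityI) (auto simp: m_def matched_set_def)
  moreover have "matched_set w \<subseteq> {..<m}" by (auto simp: matched_set_def)
  ultimately show ?thesis by (simp add: accepting_sets_def matched_set_def)
qed

text \<open>The choice of the number \<open>r\<close> of copies: \<open>2\<^sup>m\<close> bounds the number of test vectors,
  each wrong one contributes at most \<open>rho\<^sup>2\<^sup>(\<^sup>r\<^sup>-\<^sup>1\<^sup>)\<close>, and the right one at least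
  \<open>((1/16)\<^sup>K)\<^sup>m\<close> (up to a common factor).\<close>

lemma exists_copies: "\<exists>r>0. 2 ^ m * rho ^ (2 * (r - 1)) \<le> ((1/16) ^ K) ^ m / 2"
proof -
  have "rho\<^sup>2 < 1" using rho_nonneg rho_less_1 by (simp add: abs_square_less_1)
  moreover have "0 < ((1/16::real) ^ K) ^ m / 2 / 2 ^ m" by simp
  ultimately obtain n where "(rho\<^sup>2) ^ n < ((1/16) ^ K) ^ m / 2 / 2 ^ m"
    using real_arch_pow_inv by blast
  then have "2 ^ m * (rho\<^sup>2) ^ n \<le> ((1/16) ^ K) ^ m / 2"
    by (simp add: field_simps)
  moreover have "rho ^ (2 * (Suc n - 1)) = (rho\<^sup>2) ^ n" by (simp add: power_mult)
  ultimately show ?thesis by (metis zero_less_Suc)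
qed

end

text \<open>Pattern \<open>i\<close> is followed by \<open>r\<close> copies of its chain (copies \<open>r i, \<dots>, r i + r - 1\<close>),
  all \<open>G\<close> chains together living in \<open>\<real>\<^sup>N\<^sup>t\<close>. The automaton has four blocks of
  dimension \<open>Nt\<close>: block \<open>0\<close> is non-halting, blocks \<open>1\<close> and \<open>2\<close> reject and block
  \<open>3\<close> accepts.\<close>

locale pt_qfa = pt_patterns +
  fixes r :: nat
  assumes r_pos: "0 < r"
begin

definition "G = m * r"
definition "Nt = B ^ G"
definition "copy_pattern c = Zs ! (c div r)"

definition "prod_state w = tensor_vec B G (\<lambda>c. chain_state B (copy_pattern c) w)"
definition "letter_proj ofs a = tensor_kernel B G (\<lambda>c. pair_avg (letter_at (copy_pattern c) a) ofs)"

definition "test_factor S c =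
  (let k = length (copy_pattern c) in
   if c div r \<in> S then (if c mod r = 0 then end_vec k else flat_vec k)
   else (if c mod r = 0 then open_vec k else signed_vec k))"
definition "test_vec S = tensor_vec B G (test_factor S)"
definition "accept_proj = family_proj Nt accepting_sets test_vec"

definition "letter_refl ofs a = block_reflection Nt (letter_proj ofs a) (ofs + 1)"
definition "end_refl = block_reflection Nt (kcompl accept_proj) 3"
definition "live_vec w = block_vec Nt (\<lambda>q. if q = 0 then prod_state w else (\<lambda>_. 0))"

definition qfa :: "'a mmqfa" where
  "qfa = \<lparr>qdim = 4 * Nt,
     trans = (\<lambda>s. case s of
        Some a \<Rightarrow> mat_of_kernel (4 * Nt) (letter_refl 1 a) * mat_of_kernel (4 * Nt) (letter_refl 0 a)
      | None \<Rightarrow> mat_of_kernel (4 * Nt) end_refl),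
     init = 0, Qacc = {3 * Nt..<4 * Nt}, Qrej = {Nt..<3 * Nt}\<rparr>"

lemma Nt_pos: "0 < Nt"
  by (simp add: Nt_def B_pos)

lemma copy_pattern_length:
  assumes "c < G"
  shows "0 < length (copy_pattern c)" "2 * length (copy_pattern c) < B"
proof -
  have "c div r < m" using assms r_pos by (simp add: G_def less_mult_imp_div_less)
  then show "0 < length (copy_pattern c)" "2 * length (copy_pattern c) < B"
    using pattern_length by (simp_all add: copy_pattern_def)
qed

lemma letter_proj_sym: "letter_proj ofs a t t' = letter_proj ofs a t' t"
  unfolding letter_proj_def by (rule tensor_kernel_sym[OF B_pos], rule pair_avg_sym)

lemma letter_proj_idem:
  assumes "ofs \<le> 1"
  shows "kmult Nt (letter_proj ofs a) (letter_proj ofs a) t t' = letter_proj ofs a t t'"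
  unfolding letter_proj_def Nt_def
proof (rule tensor_kernel_idem[OF B_pos], rule pair_avg_idem)
  fix c l assume "c < G" "letter_at (copy_pattern c) a l"
  then show "ofs + 2 * l + 1 < B"
    using assms copy_pattern_length(2)[OF \<open>c < G\<close>] by (auto simp: letter_at_def)
qed

lemma kapply_letter_projs:
  "kapply Nt (letter_proj 1 a) (kapply Nt (letter_proj 0 a) (prod_state w)) t = prod_state (w @ [a]) t"
proof -
  have "kapply Nt (letter_proj 1 a) (kapply Nt (letter_proj 0 a) (prod_state w)) t
      = kapply Nt (letter_proj 1 a)
          (tensor_vec B G (\<lambda>c. kapply B (pair_avg (letter_at (copy_pattern c) a) 0)
             (chain_state B (copy_pattern c) w))) t"
    by (rule kapply_cong) (simp add: Nt_def letter_proj_def prod_state_def kapply_tensor[OF B_pos])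
  also have "\<dots> = prod_state (w @ [a]) t"
    by (simp add: Nt_def letter_proj_def kapply_tensor[OF B_pos] prod_state_def chain_state_def
        chain_step_def)
  finally show ?thesis .
qed

lemma prod_state_Nil: "t < Nt \<Longrightarrow> prod_state [] t = (if t = 0 then 1 else 0)"
  using tensor_vec_basis_zero[OF B_pos, of t G]
  by (simp add: prod_state_def chain_state_def Nt_def)

lemma test_vec_orthonormal:
  assumes "S \<in> accepting_sets" "S' \<in> accepting_sets"
  shows "dot Nt (test_vec S) (test_vec S') = (if S = S' then 1 else 0)"
proof -
  have prod: "dot Nt (test_vec S) (test_vec S') = (\<Prod>c<G. dot B (test_factor S c) (test_factor S' c))"
    unfolding test_vec_def Nt_def by (rule dot_tensor[OF B_pos])
  show ?thesis
  proof (cases "S = S'")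
    case True
    have "dot B (test_factor S c) (test_factor S c) = 1" if "c < G" for c
      using copy_pattern_length[OF that]
      by (auto simp: test_factor_def Let_def dot_end_vec_self dot_flat_vec_self dot_open_vec_self
          dot_signed_vec_self)
    then show ?thesis using prod True by simp
  next
    case False
    then obtain i where i: "i < m" "i \<in> S \<longleftrightarrow> i \<notin> S'"
      using assms by (auto simp: accepting_sets_def)
    then have c: "i * r < G" "i * r div r = i" "i * r mod r = 0" using r_pos by (auto simp: G_def)
    then have "dot B (test_factor S (i * r)) (test_factor S' (i * r)) = 0"
      using i by (auto simp: test_factor_def Let_def dot_end_vec_open_vec dot_open_vec_end_vec)
    then have "(\<Prod>c<G. dot B (test_factor S c) (test_factor S' c)) = 0"
      using c by (intro prod_zero) auto
    then show ?thesis using prod False by simp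
  qed
qed

lemma accept_proj_sym: "accept_proj t t' = accept_proj t' t"
  unfolding accept_proj_def by (rule family_proj_sym)

lemma accept_proj_idem: "kmult Nt accept_proj accept_proj t t' = accept_proj t t'"
  unfolding accept_proj_def by (rule family_proj_idem[OF finite_accepting_sets test_vec_orthonormal])

lemma sum_sq_kapply_accept_proj:
  "(\<Sum>t<Nt. (kapply Nt accept_proj Y t)\<^sup>2) = (\<Sum>S\<in>accepting_sets. (dot Nt (test_vec S) Y)\<^sup>2)"
  unfolding accept_proj_def
  by (rule sum_sq_kapply_family_proj[OF finite_accepting_sets test_vec_orthonormal])

lemma wf_qfa: "wf_mmqfa qfa"
proof -
  have "unitary_mat (4 * Nt) (mat_of_kernel (4 * Nt) (letter_refl ofs a))" if "ofs \<le> 1" for ofs a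
    unfolding letter_refl_def
    by (rule unitary_block_reflection) (use that letter_proj_sym letter_proj_idem Nt_pos in auto)
  moreover have "unitary_mat (4 * Nt) (mat_of_kernel (4 * Nt) end_refl)"
    unfolding end_refl_def
    by (rule unitary_block_reflection)
      (use kcompl_sym[OF accept_proj_sym] kcompl_idem[OF accept_proj_idem] Nt_pos in auto)
  ultimately have "unitary_mat (4 * Nt) (trans qfa s)" for s
    by (cases s) (auto simp: qfa_def intro: unitary_mat_mult)
  then show ?thesis using Nt_pos by (auto simp: wf_mmqfa_def qfa_def)
qed

end

context pt_qfa
begin

definition "letter_image a w =
  kapply (4 * Nt) (letter_refl 1 a) (kapply (4 * Nt) (letter_refl 0 a) (live_vec w))"

lemma trans_qfa_Some:
  "trans qfa (Some a) *\<^sub>v vec_of_real (4 * Nt) (live_vec w) = vec_of_real (4 * Nt) (letter_image a w)"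
proof -
  have "trans qfa (Some a) *\<^sub>v vec_of_real (4 * Nt) (live_vec w)
      = mat_of_kernel (4 * Nt) (letter_refl 1 a) *\<^sub>v
          (mat_of_kernel (4 * Nt) (letter_refl 0 a) *\<^sub>v vec_of_real (4 * Nt) (live_vec w))"
    by (simp add: qfa_def assoc_mult_mat_vec[of _ "4 * Nt" "4 * Nt" _ "4 * Nt"])
  then show ?thesis by (simp add: mat_of_kernel_mult_vec letter_image_def)
qed

lemma trans_qfa_None:
  "trans qfa None *\<^sub>v vec_of_real (4 * Nt) v = vec_of_real (4 * Nt) (kapply (4 * Nt) end_refl v)"
  by (simp add: qfa_def mat_of_kernel_mult_vec)

lemma letter_image_live_accepting:
  assumes i: "i < 4 * Nt" and "i div Nt \<in> {0, 3}"
  shows "letter_image a w i = (if i div Nt = 0 then prod_state (w @ [a]) (i mod Nt) else 0)"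
proof -
  define Y where "Y = kapply Nt (letter_proj 0 a) (prod_state w)"
  define vb where "vb q = (if q = 0 then Y else if q = 1 then (\<lambda>t. prod_state w t - Y t) else (\<lambda>_. 0))"
    for q :: nat
  have refl: "letter_refl 0 a = block_reflection Nt (letter_proj 0 a) 1"
    "letter_refl 1 a = block_reflection Nt (letter_proj 1 a) 2"
    by (simp_all add: letter_refl_def numeral_2_eq_2)
  have "kapply (4 * Nt) (letter_refl 0 a) (live_vec w) j = block_vec Nt vb j" if "j < 4 * Nt" for j
    unfolding refl using kapply_block_reflection[OF Nt_pos, of 1 j "letter_proj 0 a"] that
    by (simp add: live_vec_def block_vec_def vb_def Y_def)
  then have "letter_image a w i = kapply (4 * Nt) (letter_refl 1 a) (block_vec Nt vb) i"
    unfolding letter_image_def by (intro kapply_cong) simp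
  also have "\<dots> = (if i div Nt = 0 then prod_state (w @ [a]) (i mod Nt) else 0)"
    unfolding refl using kapply_block_reflection[OF Nt_pos, of 2 i "letter_proj 1 a" vb] i assms(2)
    by (auto simp: vb_def Y_def kapply_letter_projs[unfolded One_nat_def])
  finally show ?thesis .
qed

lemma Qnon_qfa: "Qnon qfa = {..<Nt}"
  by (auto simp: Qnon_def qfa_def)

lemma Qacc_qfa: "Qacc qfa = {3 * Nt..<4 * Nt}"
  by (simp add: qfa_def)

lemma proj_Qnon_letter:
  "proj (Qnon qfa) (trans qfa (Some a) *\<^sub>v vec_of_real (4 * Nt) (live_vec w))
    = vec_of_real (4 * Nt) (live_vec (w @ [a]))"
  unfolding trans_qfa_Some proj_vec_of_real Qnon_qfa
proof (rule vec_of_real_cong)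
  fix i assume i: "i < 4 * Nt"
  show "(if i \<in> {..<Nt} then letter_image a w i else 0) = live_vec (w @ [a]) i"
  proof (cases "i < Nt")
    case True
    then show ?thesis using letter_image_live_accepting[OF i] by (simp add: live_vec_def block_vec_def)
  next
    case False
    then have "i div Nt \<noteq> 0" using Nt_pos by (auto simp: div_eq_0_iff)
    then show ?thesis using False by (simp add: live_vec_def block_vec_def)
  qed
qed

lemma proj_Qacc_letter:
  "proj (Qacc qfa) (trans qfa (Some a) *\<^sub>v vec_of_real (4 * Nt) (live_vec w)) = 0\<^sub>v (4 * Nt)"
  unfolding trans_qfa_Some proj_vec_of_real zero_vec_of_real
proof (rule vec_of_real_cong)
  fix i assume i: "i < 4 * Nt"
  show "(if i \<in> Qacc qfa then letter_image a w i else 0) = 0"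
  proof (cases "i \<in> Qacc qfa")
    case True
    then have "i div Nt = 3" using Nt_pos by (auto simp: qfa_def div_nat_eqI)
    then show ?thesis using letter_image_live_accepting[OF i] by simp
  qed simp
qed

lemma basis_ket_live_vec_Nil: "basis_ket (4 * Nt) 0 = vec_of_real (4 * Nt) (live_vec [])"
  unfolding basis_ket_vec_of_real
proof (rule vec_of_real_cong)
  fix i assume "i < 4 * Nt"
  show "(if i = 0 then 1 else 0) = live_vec [] i"
  proof (cases "i < Nt")
    case True
    then show ?thesis using prod_state_Nil[OF True] by (simp add: live_vec_def block_vec_def)
  next
    case False
    then have "i div Nt \<noteq> 0" "i \<noteq> 0" using Nt_pos by (auto simp: div_eq_0_iff)
    then show ?thesis by (simp add: live_vec_def block_vec_def)
  qed
qed

lemma run_qfa_letters: "\<exists>p. run qfa (map Some w) = (vec_of_real (4 * Nt) (live_vec w), 0, p)"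
proof (induction w rule: rev_induct)
  case Nil
  then show ?case by (simp add: run_def qfa_def basis_ket_live_vec_Nil)
next
  case (snoc a w)
  then obtain p where "run qfa (map Some w) = (vec_of_real (4 * Nt) (live_vec w), 0, p)" by blast
  then have "run qfa (map Some (w @ [a])) = step qfa (Some a) (vec_of_real (4 * Nt) (live_vec w), 0, p)"
    by (simp add: run_def)
  then show ?case
    by (simp add: step_def Let_def proj_Qnon_letter proj_Qacc_letter sqnorm_vec_of_real
        zero_vec_of_real)
qed

lemma end_decisive_qfa: "end_decisive qfa"
  unfolding end_decisive_def
proof (intro allI)
  fix x a
  obtain p where "run qfa (map Some x) = (vec_of_real (4 * Nt) (live_vec x), 0, p)"
    using run_qfa_letters by blast
  then show "proj (Qacc qfa) (trans qfa (Some a) *\<^sub>v fst (run qfa (map Some x))) = 0\<^sub>v (qdim qfa)"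
    using proj_Qacc_letter by (simp add: qfa_def)
qed

lemma acc_prob_qfa: "acc_prob qfa w = (\<Sum>S\<in>accepting_sets. (dot Nt (test_vec S) (prod_state w))\<^sup>2)"
proof -
  obtain p where run: "run qfa (map Some w) = (vec_of_real (4 * Nt) (live_vec w), 0, p)"
    using run_qfa_letters by blast
  have acc_block: "kapply (4 * Nt) end_refl (live_vec w) (t + Nt * 3) = kapply Nt accept_proj (prod_state w) t"
    if "t < Nt" for t
    using kapply_block_reflection[OF Nt_pos, of 3 "t + Nt * 3" "kcompl accept_proj"] that
    by (simp add: end_refl_def live_vec_def kapply_kcompl)
  have "acc_prob qfa w = fst (snd (step qfa None (run qfa (map Some w))))"
    by (simp add: acc_prob_def run_def)
  also have "\<dots> = (\<Sum>i<4 * Nt. (if i \<in> {3 * Nt..<4 * Nt} then kapply (4 * Nt) end_refl (live_vec w) i else 0)\<^sup>2)"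
    by (simp add: run step_def trans_qfa_None Let_def proj_vec_of_real sqnorm_vec_of_real Qacc_qfa)
  also have "\<dots> = (\<Sum>t<Nt. (kapply (4 * Nt) end_refl (live_vec w) (t + Nt * 3))\<^sup>2)"
    unfolding sum_blocks sum_four by simp
  also have "\<dots> = (\<Sum>t<Nt. (kapply Nt accept_proj (prod_state w) t)\<^sup>2)"
    by (simp add: acc_block)
  also have "\<dots> = (\<Sum>S\<in>accepting_sets. (dot Nt (test_vec S) (prod_state w))\<^sup>2)"
    by (rule sum_sq_kapply_accept_proj)
  finally show ?thesis .
qed

end

lemma double_le_16_power: "k < K \<Longrightarrow> 2 * k \<le> (16::nat) ^ K"
proof -
  assume "k < K"
  moreover have "K < 2 ^ K" by (rule less_exp)
  ultimately have "k < 2 ^ K" by linarith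
  then have "2 * k \<le> 2 ^ Suc K" by simp
  also have "(2::nat) ^ Suc K \<le> 2 ^ (4 * K)" using \<open>k < K\<close> by (intro power_increasing) auto
  finally show ?thesis by (simp add: power_mult)
qed

context pt_qfa
begin

definition "chain_end i w = chain_state B (Zs ! i) w (2 * length (Zs ! i))"
definition "norm_factor i = (1 / sqrt (2 * length (Zs ! i) + 1)) ^ (r - 1)"
definition "amp i S w = pattern_amp r (length (Zs ! i)) (i \<in> S) (chain_end i w)"

lemma chain_inv_pattern:
  "i < m \<Longrightarrow> chain_inv B (chain_state B (Zs ! i) w) (matched_length (Zs ! i) w)"
  using chain_inv_chain_state pattern_length(3) by blast

lemma dot_test_factor_copy:
  fixes w :: "'a list"
  assumes i: "i < m" and j: "j < r"
  defines "k \<equiv> length (Zs ! i)" and "t \<equiv> chain_end i w"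
  shows "dot B (test_factor S (j + r * i)) (chain_state B (copy_pattern (j + r * i)) w) =
    (if j = 0 then (if i \<in> S then t else (1 - t) / sqrt (2 * k))
     else (if i \<in> S then 1 / sqrt (2 * k + 1) else (1 - 2 * t) / sqrt (2 * k + 1)))"
proof -
  define x where "x = chain_state B (Zs ! i) w"
  have inv: "chain_inv B x (matched_length (Zs ! i) w)"
    using chain_inv_pattern[OF i] by (simp add: x_def)
  have p: "matched_length (Zs ! i) w \<le> k" by (simp add: k_def matched_length_le)
  have k: "2 * k < B" using pattern_length(3)[OF i] by (simp add: k_def)
  have "(j + r * i) div r = i" "(j + r * i) mod r = j" and copy: "copy_pattern (j + r * i) = Zs ! i"
    using j by (simp_all add: copy_pattern_def)
  then have "test_factor S (j + r * i) = (if i \<in> S then (if j = 0 then end_vec k else flat_vec k)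
      else (if j = 0 then open_vec k else signed_vec k))"
    by (simp only: test_factor_def Let_def k_def)
  then show ?thesis
    using dot_end_vec[OF inv p k] dot_flat_vec[OF inv p k] dot_open_vec[OF inv p k]
      dot_signed_vec[OF inv p k] copy by (simp add: x_def t_def chain_end_def k_def)
qed

lemma prod_dot_test_factor_copies:
  assumes i: "i < m"
  shows "(\<Prod>j<r. dot B (test_factor S (j + r * i)) (chain_state B (copy_pattern (j + r * i)) w))
    = norm_factor i * amp i S w"
proof -
  define k where "k = length (Zs ! i)"
  define t where "t = chain_end i w"
  obtain r' where r': "r = Suc r'" using r_pos by (cases r) auto
  have "(\<Prod>j<r. dot B (test_factor S (j + r * i)) (chain_state B (copy_pattern (j + r * i)) w))
      = (\<Prod>j<Suc r'. (if j = 0 then (if i \<in> S then t else (1 - t) / sqrt (2 * k))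
      else (if i \<in> S then 1 / sqrt (2 * k + 1) else (1 - 2 * t) / sqrt (2 * k + 1))))"
    unfolding r' using dot_test_factor_copy[OF i] r' by (intro prod.cong) (simp_all add: k_def t_def)
  also have "\<dots> = (if i \<in> S then t else (1 - t) / sqrt (2 * k)) *
      (if i \<in> S then 1 / sqrt (2 * k + 1) else (1 - 2 * t) / sqrt (2 * k + 1)) ^ r'"
    unfolding prod.lessThan_Suc_shift by simp
  also have "\<dots> = norm_factor i * amp i S w"
  proof -
    have "r - 1 = r'" using r' by simp
    then show ?thesis
      by (simp add: norm_factor_def amp_def pattern_amp_def k_def t_def power_divide mult_ac)
  qed
  finally show ?thesis .
qed

lemma dot_test_vec_prod_state:
  "dot Nt (test_vec S) (prod_state w) = (\<Prod>i<m. norm_factor i) * (\<Prod>i<m. amp i S w)"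
proof -
  have "dot Nt (test_vec S) (prod_state w)
      = (\<Prod>c<G. dot B (test_factor S c) (chain_state B (copy_pattern c) w))"
    unfolding test_vec_def prod_state_def Nt_def by (rule dot_tensor[OF B_pos])
  also have "\<dots> = (\<Prod>i<m. \<Prod>j<r. dot B (test_factor S (j + r * i))
      (chain_state B (copy_pattern (j + r * i)) w))"
    unfolding G_def by (rule prod_blocks)
  also have "\<dots> = (\<Prod>i<m. norm_factor i * amp i S w)"
    by (simp add: prod_dot_test_factor_copies)
  finally show ?thesis by (simp add: prod.distrib)
qed

lemma acc_prob_qfa_factor:
  "acc_prob qfa w = (\<Prod>i<m. norm_factor i)\<^sup>2 * (\<Sum>S\<in>accepting_sets. \<Prod>i<m. (amp i S w)\<^sup>2)"
  unfolding acc_prob_qfa dot_test_vec_prod_state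
  by (simp add: power_mult_distrib sum_distrib_left prod_power_distrib)

lemma chain_end_bounds:
  assumes i: "i < m"
  shows "0 \<le> chain_end i w" "chain_end i w \<le> 1"
    and "i \<in> matched_set w \<Longrightarrow> (1/4) ^ K \<le> chain_end i w"
    and "i \<in> matched_set w \<Longrightarrow> \<bar>1 - 2 * chain_end i w\<bar> \<le> rho"
    and "i \<notin> matched_set w \<Longrightarrow> chain_end i w = 0"
proof -
  define k where "k = length (Zs ! i)"
  define x where "x = chain_state B (Zs ! i) w"
  have inv: "chain_inv B x (matched_length (Zs ! i) w)"
    using chain_inv_pattern[OF i] by (simp add: x_def)
  have p: "matched_length (Zs ! i) w \<le> k" by (simp add: k_def matched_length_le)
  have k: "0 < k" "k < K" "2 * k < B" using pattern_length[OF i] by (simp_all add: k_def)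
  have x: "chain_end i w = x (2 * k)" by (simp add: chain_end_def x_def k_def)
  have matched: "i \<in> matched_set w \<longleftrightarrow> matched_length (Zs ! i) w = k"
    using i by (simp add: matched_set_def k_def matched_length_eq_length_iff)
  have K4: "(1/4::real) ^ K \<le> (1/4) ^ k" using k by (intro power_decreasing) auto
  show "0 \<le> chain_end i w" "chain_end i w \<le> 1"
    unfolding x using chain_nonneg[OF inv p k(3) k(3)] chain_le_1[OF inv p k(3) k(3)] by simp_all
  show "(1/4) ^ K \<le> chain_end i w" if "i \<in> matched_set w"
  proof -
    have "(1/4) ^ k \<le> x (2 * k)" using chain_end_reached[OF inv p k(3)] matched that by simp
    then show ?thesis unfolding x using K4 by linarith
  qed
  show "\<bar>1 - 2 * chain_end i w\<bar> \<le> rho" if "i \<in> matched_set w"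
  proof -
    have "\<bar>1 - 2 * x (2 * k)\<bar> \<le> 1 - 2 * (1/4) ^ k"
      using chain_end_reached_bound[OF inv p k(3)] matched that k(1) by simp
    then show ?thesis unfolding x rho_def using K4 by linarith
  qed
  show "chain_end i w = 0" if "i \<notin> matched_set w"
    unfolding x using chain_end_unreached[OF inv p k(3)] matched that p by simp
qed

lemma amp_sq_le_1: "i < m \<Longrightarrow> (amp i S w)\<^sup>2 \<le> 1"
  unfolding amp_def by (rule pattern_amp_sq_le_1[OF chain_end_bounds(1,2) pattern_length(1)])

lemma amp_matched_set: "i < m \<Longrightarrow> (1/16) ^ K \<le> (amp i (matched_set w) w)\<^sup>2"
  using pattern_amp_expected_occurrence[OF chain_end_bounds(3)]
    pattern_amp_expected_absence[OF pattern_length(1) double_le_16_power[OF pattern_length(2)]]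
  by (cases "i \<in> matched_set w") (simp_all add: amp_def chain_end_bounds(5))

lemma amp_wrong_set:
  assumes "i < m" "i \<in> S \<longleftrightarrow> i \<notin> matched_set w"
  shows "(amp i S w)\<^sup>2 \<le> rho ^ (2 * (r - 1))"
proof (cases "i \<in> S")
  case True
  then show ?thesis
    using assms chain_end_bounds(5) rho_nonneg by (simp add: amp_def pattern_amp_unexpected_absence)
next
  case False
  then show ?thesis
    using assms pattern_amp_unexpected_occurrence[OF chain_end_bounds(1,2) pattern_length(1)
        chain_end_bounds(4)]
    by (simp add: amp_def)
qed

lemma prod_amp_matched_set: "((1/16) ^ K) ^ m \<le> (\<Prod>i<m. (amp i (matched_set w) w)\<^sup>2)"
  using prod_mono[of "{..<m}" "\<lambda>_. (1/16::real) ^ K" "\<lambda>i. (amp i (matched_set w) w)\<^sup>2"]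
    amp_matched_set by simp

lemma prod_amp_wrong_set:
  assumes "S \<subseteq> {..<m}" "S \<noteq> matched_set w"
  shows "(\<Prod>i<m. (amp i S w)\<^sup>2) \<le> rho ^ (2 * (r - 1))"
proof -
  obtain i where i: "i < m" "i \<in> S \<longleftrightarrow> i \<notin> matched_set w"
    using assms by (auto simp: matched_set_def)
  have "(\<Prod>i<m. (amp i S w)\<^sup>2) = (amp i S w)\<^sup>2 * (\<Prod>j\<in>{..<m} - {i}. (amp j S w)\<^sup>2)"
    using i by (subst prod.remove[of _ i]) auto
  also have "\<dots> \<le> rho ^ (2 * (r - 1)) * 1"
    by (rule mult_mono) (use amp_wrong_set amp_sq_le_1 i rho_nonneg in \<open>auto intro: prod_le_1 prod_nonneg\<close>)
  finally show ?thesis by simp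
qed

lemma accepts_bounded_error_qfa:
  assumes copies: "2 ^ m * rho ^ (2 * (r - 1)) \<le> ((1/16) ^ K) ^ m / 2"
  shows "accepts_bounded_error qfa {w. F (map (\<lambda>z. in_pattern z w) Zs)}"
proof (rule accepts_bounded_error_of_gap)
  define \<nu> where "\<nu> = (\<Prod>i<m. norm_factor i)\<^sup>2"
  have "0 < \<nu>" by (simp add: \<nu>_def norm_factor_def prod_pos)
  then show "0 < \<nu> * ((1/16) ^ K) ^ m" by simp
  fix w
  have acc: "acc_prob qfa w = \<nu> * (\<Sum>S\<in>accepting_sets. \<Prod>i<m. (amp i S w)\<^sup>2)"
    by (simp add: acc_prob_qfa_factor \<nu>_def)
  have nonneg: "0 \<le> (\<Prod>i<m. (amp i S w)\<^sup>2)" for S by (simp add: prod_nonneg)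
  show "\<nu> * ((1/16) ^ K) ^ m \<le> acc_prob qfa w" if "w \<in> {w. F (map (\<lambda>z. in_pattern z w) Zs)}"
  proof -
    have "matched_set w \<in> accepting_sets" using that matched_set_accepting_iff by simp
    then have "(\<Prod>i<m. (amp i (matched_set w) w)\<^sup>2) \<le> (\<Sum>S\<in>accepting_sets. \<Prod>i<m. (amp i S w)\<^sup>2)"
      using finite_accepting_sets nonneg by (intro member_le_sum)
    then have "((1/16) ^ K) ^ m \<le> (\<Sum>S\<in>accepting_sets. \<Prod>i<m. (amp i S w)\<^sup>2)"
      using prod_amp_matched_set[of w] by linarith
    then show ?thesis unfolding acc using \<open>0 < \<nu>\<close> by (simp add: mult_left_mono)
  qed
  show "acc_prob qfa w \<le> \<nu> * ((1/16) ^ K) ^ m / 2" if "w \<notin> {w. F (map (\<lambda>z. in_pattern z w) Zs)}"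
  proof -
    have "matched_set w \<notin> accepting_sets" using that matched_set_accepting_iff by simp
    then have "(\<Prod>i<m. (amp i S w)\<^sup>2) \<le> rho ^ (2 * (r - 1))" if "S \<in> accepting_sets" for S
      using that by (intro prod_amp_wrong_set) (auto simp: accepting_sets_def)
    then have "(\<Sum>S\<in>accepting_sets. \<Prod>i<m. (amp i S w)\<^sup>2) \<le> card accepting_sets * rho ^ (2 * (r - 1))"
      by (rule sum_bounded_above)
    also have "\<dots> \<le> 2 ^ m * rho ^ (2 * (r - 1))"
      using card_accepting_sets rho_nonneg
      by (intro mult_right_mono) (simp_all flip: of_nat_le_iff)
    finally show ?thesis unfolding acc using copies \<open>0 < \<nu>\<close> by (simp add: mult_left_mono)
  qed
qed

end

theorem theorem4p15:
  fixes L :: "('a::finite) list set"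
  assumes "piecewise_testable L"
  shows "\<exists>M :: 'a mmqfa. wf_mmqfa M \<and> end_decisive M \<and> accepts_bounded_error M L"
proof -
  obtain Zs :: "'a list list" and F where nonempty: "\<forall>z\<in>set Zs. z \<noteq> []"
    and L: "\<forall>w. w \<in> L \<longleftrightarrow> F (map (\<lambda>z. in_pattern z w) Zs)"
    using piecewise_testable_normal_form[OF assms] by blast
  interpret pt_patterns Zs F
    by unfold_locales (use nonempty in auto)
  obtain r where "0 < r" and copies: "2 ^ m * rho ^ (2 * (r - 1)) \<le> ((1/16) ^ K) ^ m / 2"
    using exists_copies by blast
  interpret pt_qfa Zs F r
    by unfold_locales fact
  have "L = {w. F (map (\<lambda>z. in_pattern z w) Zs)}" using L by auto
  then show ?thesis using wf_qfa end_decisive_qfa accepts_bounded_error_qfa[OF copies] by blast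
qed

end
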